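(* Let $(Q,f)$ be a triangulation quiver with at least three vertices and $\partial(Q,f)$ non-empty, and let $m_\bullet,c_\bullet,b_\bullet$ be weight, parameter and border functions of $(Q,f)$. Assume that $K$ has characteristic different from $2$. Then the algebras $\Lambda(Q,f,m_\bullet,c_\bullet,b_\bullet)$ and $\Lambda(Q,f,m_\bullet,c_\bullet)$ are isomorphic.
   Context: $K$ is an algebraically closed field. A triangulation quiver is $(Q,f)$ with $Q$ a finite connected quiver, each vertex the source and target of exactly two arrows, $f$ a permutation of $Q_1$ with $s(f(\alpha))=t(\alpha)$, $f^3=\mathrm{id}$. $\bar\alpha$ is the other arrow with source $s(\alpha)$, $g(\alpha)=\overline{f(\alpha)}$, $n_\alpha$ the size of the $g$-orbit of $\alpha$. Weight $m_\bullet$ (positive integers) and parameter $c_\bullet$ (in $K^*$) functions on $g$-orbits, values $m_\alpha,c_\alpha$, with $m_\alpha n_\alpha\ge3$. $A_\alpha=(\alpha g(\alpha)\cdots g^{n_\alpha-1}(\alpha))^{m_\alpha-1}\alpha g(\alpha)\cdots g^{n_\alpha-2}(\alpha)$ ($n_\alpha\ge2$), $A_\alpha=\alpha^{m_\alpha-1}$ ($n_\alpha=1$), $B_\alpha=(\alpha g(\alpha)\cdots g^{n_\alpha-1}(\alpha))^{m_\alpha}$. $\Lambda(Q,f,m_\bullet,c_\bullet)=KQ/I$, $I$ generated by $\alpha f(\alpha)-c_{\bar\alpha}A_{\bar\alpha}$ and $\beta f(\beta)g(f(\beta))$ for all arrows. A border vertex is a vertex $i$ with a loop $\alpha$ at $i$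 with $f(\alpha)=\alpha$ (border loop); $\partial(Q,f)$ is the set of border vertices; a border function is any $b_\bullet:\partial(Q,f)\to K$. $\Lambda(Q,f,m_\bullet,c_\bullet,b_\bullet)=KQ/\bar I$, $\bar I$ generated by $\alpha f(\alpha)-c_{\bar\alpha}A_{\bar\alpha}$ for non-border-loop arrows $\alpha$, $\alpha^2-c_{\bar\alpha}A_{\bar\alpha}-b_{s(\alpha)}B_{\bar\alpha}$ for border loops $\alpha$, and $\beta f(\beta)g(f(\beta))$ for all $\beta$. *)

theory Defs
  imports "HOL-Computational_Algebra.Polynomial"
begin

text \<open>A quiver is given by a vertex set Q0, an arrow set Q1 and source/target maps s, t.
  Arrows compose left to right: the path alpha beta means first alpha, then beta
  (so t alpha = s beta).\<close>

definition bar :: "'a set \<Rightarrow> ('a \<Rightarrow> 'v) \<Rightarrow> 'a \<Rightarrow> 'a" where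
  "bar Q1 s \<alpha> = (THE \<beta>. \<beta> \<in> Q1 \<and> s \<beta> = s \<alpha> \<and> \<beta> \<noteq> \<alpha>)"

definition gperm :: "'a set \<Rightarrow> ('a \<Rightarrow> 'v) \<Rightarrow> ('a \<Rightarrow> 'a) \<Rightarrow> 'a \<Rightarrow> 'a" where
  "gperm Q1 s f \<alpha> = bar Q1 s (f \<alpha>)"

definition orbsize :: "'a set \<Rightarrow> ('a \<Rightarrow> 'v) \<Rightarrow> ('a \<Rightarrow> 'a) \<Rightarrow> 'a \<Rightarrow> nat" where
  "orbsize Q1 s f \<alpha> = (LEAST k. 0 < k \<and> (gperm Q1 s f ^^ k) \<alpha> = \<alpha>)"

definition triangulation_quiver ::
  "'v set \<Rightarrow> 'a set \<Rightarrow> ('a \<Rightarrow> 'v) \<Rightarrow> ('a \<Rightarrow> 'v) \<Rightarrow> ('a \<Rightarrow> 'a) \<Rightarrow> bool" where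
  "triangulation_quiver Q0 Q1 s t f \<longleftrightarrow>
     finite Q0 \<and> finite Q1 \<and> Q0 \<noteq> {} \<and>
     (\<forall>a\<in>Q1. s a \<in> Q0 \<and> t a \<in> Q0) \<and>
     (\<forall>i\<in>Q0. card {a\<in>Q1. s a = i} = 2 \<and> card {a\<in>Q1. t a = i} = 2) \<and>
     (\<forall>i\<in>Q0. \<forall>j\<in>Q0. (i, j) \<in> ({(s a, t a) |a. a \<in> Q1} \<union> {(t a, s a) |a. a \<in> Q1})\<^sup>*) \<and>
     bij_betw f Q1 Q1 \<and>
     (\<forall>a\<in>Q1. s (f a) = t a \<and> f (f (f a)) = a)"

definition weight_function :: "'a set \<Rightarrow> ('a \<Rightarrow> 'v) \<Rightarrow> ('a \<Rightarrow> 'a) \<Rightarrow> ('a \<Rightarrow> nat) \<Rightarrow> bool" where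
  "weight_function Q1 s f m \<longleftrightarrow> (\<forall>a\<in>Q1. 0 < m a \<and> m (gperm Q1 s f a) = m a)"

definition parameter_function :: "'a set \<Rightarrow> ('a \<Rightarrow> 'v) \<Rightarrow> ('a \<Rightarrow> 'a) \<Rightarrow> ('a \<Rightarrow> 'k::field) \<Rightarrow> bool" where
  "parameter_function Q1 s f c \<longleftrightarrow> (\<forall>a\<in>Q1. c a \<noteq> 0 \<and> c (gperm Q1 s f a) = c a)"

definition border_loop :: "'a set \<Rightarrow> ('a \<Rightarrow> 'v) \<Rightarrow> ('a \<Rightarrow> 'v) \<Rightarrow> ('a \<Rightarrow> 'a) \<Rightarrow> 'a \<Rightarrow> bool" where
  "border_loop Q1 s t f \<alpha> \<longleftrightarrow> \<alpha> \<in> Q1 \<and> s \<alpha> = t \<alpha> \<and> f \<alpha> = \<alpha>"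

definition border_vertices :: "'a set \<Rightarrow> ('a \<Rightarrow> 'v) \<Rightarrow> ('a \<Rightarrow> 'v) \<Rightarrow> ('a \<Rightarrow> 'a) \<Rightarrow> 'v set" where
  "border_vertices Q1 s t f = {i. \<exists>\<alpha>. border_loop Q1 s t f \<alpha> \<and> s \<alpha> = i}"

text \<open>A path is a pair (v, w): start vertex v and arrow list w (w = [] is the
  trivial path e_v). Elements of KQ are finitely supported K-valued functions on
  valid paths.\<close>

definition valid_path :: "'v set \<Rightarrow> 'a set \<Rightarrow> ('a \<Rightarrow> 'v) \<Rightarrow> ('a \<Rightarrow> 'v) \<Rightarrow> 'v \<times> 'a list \<Rightarrow> bool" where
  "valid_path Q0 Q1 s t p \<longleftrightarrow>
     fst p \<in> Q0 \<and> set (snd p) \<subseteq> Q1 \<and> (snd p \<noteq> [] \<longrightarrow> s (hd (snd p)) = fst p) \<and>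
     (\<forall>i. Suc i < length (snd p) \<longrightarrow> t (snd p ! i) = s (snd p ! Suc i))"

definition pend :: "('a \<Rightarrow> 'v) \<Rightarrow> 'v \<times> 'a list \<Rightarrow> 'v" where
  "pend t p = (if snd p = [] then fst p else t (last (snd p)))"

definition path_alg :: "'v set \<Rightarrow> 'a set \<Rightarrow> ('a \<Rightarrow> 'v) \<Rightarrow> ('a \<Rightarrow> 'v) \<Rightarrow> ('v \<times> 'a list \<Rightarrow> 'k::field) set" where
  "path_alg Q0 Q1 s t = {x. finite {p. x p \<noteq> 0} \<and> (\<forall>p. x p \<noteq> 0 \<longrightarrow> valid_path Q0 Q1 s t p)}"

text \<open>Multiplication = concatenation of paths (zero if not composable).\<close>
definition pmult :: "('a \<Rightarrow> 'v) \<Rightarrow> ('v \<times> 'a list \<Rightarrow> 'k::field) \<Rightarrow> ('v \<times> 'a list \<Rightarrow> 'k) \<Rightarrow> ('v \<times> 'a list \<Rightarrow> 'k)" where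
  "pmult t x y = (\<lambda>(v, w). \<Sum>i\<le>length w. x (v, take i w) * y (pend t (v, take i w), drop i w))"

definition punit :: "'v set \<Rightarrow> ('v \<times> 'a list \<Rightarrow> 'k::field)" where
  "punit Q0 = (\<lambda>(v, w). if v \<in> Q0 \<and> w = [] then 1 else 0)"

definition pbasis :: "'v \<times> 'a list \<Rightarrow> ('v \<times> 'a list \<Rightarrow> 'k::field)" where
  "pbasis p = (\<lambda>q. if q = p then 1 else 0)"

inductive_set ideal_gen :: "('b \<Rightarrow> 'k::field) set \<Rightarrow> (('b \<Rightarrow> 'k) \<Rightarrow> ('b \<Rightarrow> 'k) \<Rightarrow> ('b \<Rightarrow> 'k))
    \<Rightarrow> ('b \<Rightarrow> 'k) set \<Rightarrow> ('b \<Rightarrow> 'k) set"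
  for A mul S where
  base: "x \<in> S \<Longrightarrow> x \<in> ideal_gen A mul S"
| zero: "(\<lambda>_. 0) \<in> ideal_gen A mul S"
| add: "x \<in> ideal_gen A mul S \<Longrightarrow> y \<in> ideal_gen A mul S \<Longrightarrow> (\<lambda>p. x p + y p) \<in> ideal_gen A mul S"
| smult: "x \<in> ideal_gen A mul S \<Longrightarrow> (\<lambda>p. c * x p) \<in> ideal_gen A mul S"
| lmult: "a \<in> A \<Longrightarrow> x \<in> ideal_gen A mul S \<Longrightarrow> mul a x \<in> ideal_gen A mul S"
| rmult: "a \<in> A \<Longrightarrow> x \<in> ideal_gen A mul S \<Longrightarrow> mul x a \<in> ideal_gen A mul S"

text \<open>K-algebra isomorphism A/I \<cong> A/J, expressed via a K-linear map phi : A \<rightarrow> A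
  inducing a unital, multiplicative bijection A/I \<rightarrow> A/J.\<close>
definition quot_alg_iso :: "('b \<Rightarrow> 'k::field) set \<Rightarrow> (('b \<Rightarrow> 'k) \<Rightarrow> ('b \<Rightarrow> 'k) \<Rightarrow> ('b \<Rightarrow> 'k))
    \<Rightarrow> ('b \<Rightarrow> 'k) \<Rightarrow> ('b \<Rightarrow> 'k) set \<Rightarrow> ('b \<Rightarrow> 'k) set \<Rightarrow> bool" where
  "quot_alg_iso A mul one I J \<longleftrightarrow>
    (\<exists>\<phi>. (\<forall>x\<in>A. \<phi> x \<in> A) \<and>
         (\<forall>x\<in>A. \<forall>y\<in>A. \<phi> (\<lambda>p. x p + y p) = (\<lambda>p. \<phi> x p + \<phi> y p)) \<and>
         (\<forall>c. \<forall>x\<in>A. \<phi> (\<lambda>p. c * x p) = (\<lambda>p. c * \<phi> x p)) \<and>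
         (\<forall>x\<in>A. \<forall>y\<in>A. (\<lambda>p. \<phi> (mul x y) p - mul (\<phi> x) (\<phi> y) p) \<in> J) \<and>
         (\<lambda>p. \<phi> one p - one p) \<in> J \<and>
         (\<forall>x\<in>A. \<phi> x \<in> J \<longleftrightarrow> x \<in> I) \<and>
         (\<forall>y\<in>A. \<exists>x\<in>A. (\<lambda>p. \<phi> x p - y p) \<in> J))"

definition gcycle :: "'a set \<Rightarrow> ('a \<Rightarrow> 'v) \<Rightarrow> ('a \<Rightarrow> 'a) \<Rightarrow> 'a \<Rightarrow> 'a list" where
  "gcycle Q1 s f \<alpha> = map (\<lambda>k. (gperm Q1 s f ^^ k) \<alpha>) [0..<orbsize Q1 s f \<alpha>]"

text \<open>A_alpha: for n_alpha = 1 this is alpha^(m_alpha - 1), since take 0 = [].\<close>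
definition Apath :: "'a set \<Rightarrow> ('a \<Rightarrow> 'v) \<Rightarrow> ('a \<Rightarrow> 'a) \<Rightarrow> ('a \<Rightarrow> nat) \<Rightarrow> 'a \<Rightarrow> 'a list" where
  "Apath Q1 s f m \<alpha> = concat (replicate (m \<alpha> - 1) (gcycle Q1 s f \<alpha>)) @
                        take (orbsize Q1 s f \<alpha> - 1) (gcycle Q1 s f \<alpha>)"

definition Bpath :: "'a set \<Rightarrow> ('a \<Rightarrow> 'v) \<Rightarrow> ('a \<Rightarrow> 'a) \<Rightarrow> ('a \<Rightarrow> nat) \<Rightarrow> 'a \<Rightarrow> 'a list" where
  "Bpath Q1 s f m \<alpha> = concat (replicate (m \<alpha>) (gcycle Q1 s f \<alpha>))"

definition zero_rels :: "'a set \<Rightarrow> ('a \<Rightarrow> 'v) \<Rightarrow> ('a \<Rightarrow> 'a) \<Rightarrow> ('v \<times> 'a list \<Rightarrow> 'k::field) set" where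
  "zero_rels Q1 s f = {pbasis (s \<beta>, [\<beta>, f \<beta>, gperm Q1 s f (f \<beta>)]) | \<beta>. \<beta> \<in> Q1}"

definition gens_I :: "'a set \<Rightarrow> ('a \<Rightarrow> 'v) \<Rightarrow> ('a \<Rightarrow> 'a) \<Rightarrow> ('a \<Rightarrow> nat) \<Rightarrow> ('a \<Rightarrow> 'k::field)
    \<Rightarrow> ('v \<times> 'a list \<Rightarrow> 'k) set" where
  "gens_I Q1 s f m c =
     {(\<lambda>p. pbasis (s \<alpha>, [\<alpha>, f \<alpha>]) p
           - c (bar Q1 s \<alpha>) * pbasis (s (bar Q1 s \<alpha>), Apath Q1 s f m (bar Q1 s \<alpha>)) p) | \<alpha>. \<alpha> \<in> Q1}
     \<union> zero_rels Q1 s f"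

definition gens_Ibar :: "'a set \<Rightarrow> ('a \<Rightarrow> 'v) \<Rightarrow> ('a \<Rightarrow> 'v) \<Rightarrow> ('a \<Rightarrow> 'a) \<Rightarrow> ('a \<Rightarrow> nat)
    \<Rightarrow> ('a \<Rightarrow> 'k::field) \<Rightarrow> ('v \<Rightarrow> 'k) \<Rightarrow> ('v \<times> 'a list \<Rightarrow> 'k) set" where
  "gens_Ibar Q1 s t f m c b =
     {(\<lambda>p. pbasis (s \<alpha>, [\<alpha>, f \<alpha>]) p
           - c (bar Q1 s \<alpha>) * pbasis (s (bar Q1 s \<alpha>), Apath Q1 s f m (bar Q1 s \<alpha>)) p)
        | \<alpha>. \<alpha> \<in> Q1 \<and> \<not> border_loop Q1 s t f \<alpha>}
     \<union> {(\<lambda>p. pbasis (s \<alpha>, [\<alpha>, \<alpha>]) p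
           - c (bar Q1 s \<alpha>) * pbasis (s (bar Q1 s \<alpha>), Apath Q1 s f m (bar Q1 s \<alpha>)) p
           - b (s \<alpha>) * pbasis (s (bar Q1 s \<alpha>), Bpath Q1 s f m (bar Q1 s \<alpha>)) p)
        | \<alpha>. border_loop Q1 s t f \<alpha>}
     \<union> zero_rels Q1 s f"

definition idealI where
  "idealI Q0 Q1 s t f m c = ideal_gen (path_alg Q0 Q1 s t) (pmult t) (gens_I Q1 s f m c)"

definition idealIbar where
  "idealIbar Q0 Q1 s t f m c b = ideal_gen (path_alg Q0 Q1 s t) (pmult t) (gens_Ibar Q1 s t f m c b)"

end

theory Submission
  imports Defs "HOL-Library.Function_Algebras"
begin

text \<open>For a border loop \<open>\<alpha>\<close> at \<open>i\<close>, with \<open>\<beta> = bar \<alpha>\<close> the other arrow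
  starting at \<open>i\<close>, put \<open>\<lambda> = b\<^sub>i / (2 c\<^sub>\<beta>)\<close>. The substitution
  \<open>\<alpha> \<mapsto> \<alpha> + \<lambda> \<alpha>\<^sup>2\<close> of all border loops is an algebra endomorphism \<open>F\<close> of
  \<open>KQ\<close>. In \<open>KQ/I\<close> the relations give \<open>\<alpha>\<^sup>4 = 0\<close> and \<open>\<alpha>\<^sup>3 = c\<^sub>\<beta> B\<^sub>\<beta>\<close>, so
  \<open>(\<alpha> + \<lambda> \<alpha>\<^sup>2)\<^sup>2 = \<alpha>\<^sup>2 + 2\<lambda> \<alpha>\<^sup>3 = c\<^sub>\<beta> A\<^sub>\<beta> + b\<^sub>i B\<^sub>\<beta>\<close>: \<open>F\<close> turns
  the border relation of \<open>Ibar\<close> into a consequence of \<open>I\<close>. The other generators are fixed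
  up to the zero relations, because a border loop inside a path is followed by \<open>\<beta>\<close> and
  \<open>\<alpha> \<alpha> \<beta>\<close> is a zero relation. Likewise \<open>G: \<alpha> \<mapsto> \<alpha> - \<lambda> \<alpha>\<^sup>2 + 2\<lambda>\<^sup>2 \<alpha>\<^sup>3\<close>
  maps \<open>I\<close> into \<open>Ibar\<close>, and \<open>F\<close>, \<open>G\<close> are mutually inverse modulo the ideals, so \<open>F\<close>
  induces \<open>KQ/Ibar \<cong> KQ/I\<close>.\<close>

section \<open>The algebra of finitely supported functions on paths\<close>

text \<open>With the pointwise ring structure on functions, \<open>K c * x\<close> is scalar multiplication,
  so module identities can be discharged by \<open>algebra_simps\<close>.\<close>

definition K :: "'k \<Rightarrow> 'b \<Rightarrow> 'k" where "K c = (\<lambda>_. c)"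

lemma K_apply [simp]: "K c x = c"
  by (simp add: K_def)

lemma pmult_add_left: "pmult t (x + y) z = pmult t x z + pmult t y z"
  by (rule ext) (auto simp: pmult_def sum.distrib algebra_simps)

lemma pmult_add_right: "pmult t z (x + y) = pmult t z x + pmult t z y"
  by (rule ext) (auto simp: pmult_def sum.distrib algebra_simps)

lemma pmult_diff_left: "pmult t (x - y) z = pmult t x z - pmult t y z"
  by (rule ext) (auto simp: pmult_def sum_subtractf algebra_simps)

lemma pmult_diff_right: "pmult t z (x - y) = pmult t z x - pmult t z y"
  by (rule ext) (auto simp: pmult_def sum_subtractf algebra_simps)

lemma K_zero [simp]: "K 0 * x = (0::'b \<Rightarrow> 'k::field)"
  by (rule ext) simp

lemma K_0: "K 0 = (0::'b \<Rightarrow> 'k::field)"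
  by (simp add: fun_eq_iff)

lemma K_uminus: "K (- c) = - (K c :: 'b \<Rightarrow> 'k::field)"
  by (simp add: fun_eq_iff)

lemma K_distrib: "K a * (x + y) = K a * x + K a * (y::'b \<Rightarrow> 'k::field)"
  by (rule ext) (simp add: algebra_simps)

lemma K_distrib_diff: "K a * (x - y) = K a * x - K a * (y::'b \<Rightarrow> 'k::field)"
  by (rule ext) (simp add: algebra_simps)

lemma pmult_K_left: "pmult t (K c * x) z = K c * pmult t x z"
  by (rule ext) (auto simp: pmult_def sum_distrib_left algebra_simps)

lemma pmult_K_right: "pmult t z (K c * x) = K c * pmult t z x"
  by (rule ext) (auto simp: pmult_def sum_distrib_left algebra_simps)

lemma pmult_scale_left: "pmult t (\<lambda>r. c * x r) z = (\<lambda>r. c * pmult t x z r)"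
  using pmult_K_left[of t c x z] by (simp add: times_fun_def)

lemma pmult_scale_right: "pmult t z (\<lambda>r. c * x r) = (\<lambda>r. c * pmult t z x r)"
  using pmult_K_right[of t z c x] by (simp add: times_fun_def)

lemma pmult_zero_left [simp]: "pmult t 0 z = 0"
  by (rule ext) (auto simp: pmult_def)

lemma pmult_zero_fun_left [simp]: "pmult t (\<lambda>_. 0) z = (\<lambda>_. 0)"
  by (rule ext) (auto simp: pmult_def)

lemma pmult_zero_fun_right [simp]: "pmult t z (\<lambda>_. 0) = (\<lambda>_. 0)"
  by (rule ext) (auto simp: pmult_def)

lemma pmult_sum_left:
  "pmult t (\<lambda>r. \<Sum>i\<in>S. g i r) y = (\<lambda>r. \<Sum>i\<in>S. pmult t (g i) y r)"
  by (rule ext) (auto simp: pmult_def sum_distrib_right intro: sum.swap)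

lemma pmult_sum_right:
  "pmult t y (\<lambda>r. \<Sum>i\<in>S. g i r) = (\<lambda>r. \<Sum>i\<in>S. pmult t y (g i) r)"
  by (rule ext) (auto simp: pmult_def sum_distrib_left intro: sum.swap)

lemma pmult_bilinear_sum:
  "pmult t (\<lambda>r. \<Sum>p\<in>S. a p * X p r) (\<lambda>r. \<Sum>q\<in>T. b q * Y q r) =
   (\<lambda>r. \<Sum>p\<in>S. \<Sum>q\<in>T. (a p * b q) * pmult t (X p) (Y q) r)"
  by (simp add: pmult_sum_left pmult_sum_right pmult_scale_left pmult_scale_right
      sum_distrib_left mult.assoc)

lemma pend_Nil [simp]: "pend t (u, []) = u"
  by (simp add: pend_def)

lemma pend_Cons [simp]: "pend t (u, a # w) = pend t (t a, w)"
  by (simp add: pend_def)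

lemma pend_append: "pend t (v, w1 @ w2) = pend t (pend t (v, w1), w2)"
  by (cases "w2 = []") (auto simp: pend_def)

lemma pend_take_drop:
  assumes "j + k \<le> length w"
  shows "pend t (pend t (v, take j w), take k (drop j w)) = pend t (v, take (j + k) w)"
  using pend_append[of t v "take j w" "take k (drop j w)"] assms
  by (simp add: take_add)

lemma pmult_assoc:
  fixes x y z :: "'v \<times> 'a list \<Rightarrow> 'k::field" and t :: "'a \<Rightarrow> 'v"
  shows "pmult t (pmult t x y) z = pmult t x (pmult t y z)"
proof (rule ext, clarify)
  fix v :: 'v and w :: "'a list"
  let ?n = "length w"
  define G where "G j k = x (v, take j w) * y (pend t (v, take j w), take k (drop j w)) *
      z (pend t (v, take (j+k) w), drop (j+k) w)" for j k
  have L: "pmult t (pmult t x y) z (v, w) = (\<Sum>i\<le>?n. \<Sum>j\<le>i. G j (i - j))"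
    unfolding pmult_def
    apply (simp add: sum_distrib_right)
    apply (rule sum.cong[OF refl])
    apply (rule sum.cong)
     apply (auto simp: G_def min_def take_drop)
    done
  have R: "pmult t x (pmult t y z) (v, w) = (\<Sum>j\<le>?n. \<Sum>k\<le>?n - j. G j k)"
    unfolding pmult_def
    apply (simp add: sum_distrib_left)
    apply (rule sum.cong[OF refl])
    apply (rule sum.cong[OF refl])
    apply (simp add: G_def pend_take_drop)
    apply (metis add.commute)
    done
  have "(\<Sum>i\<le>?n. \<Sum>j\<le>i. G j (i - j)) = (\<Sum>(j,k)\<in>{(j,k). j+k \<le> ?n}. G j k)"
    by (rule sum.triangle_reindex_eq[symmetric])
  also have "{(j,k). j+k \<le> ?n} = Sigma {..?n} (\<lambda>j. {..?n - j})" by auto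
  also have "(\<Sum>(j,k)\<in>Sigma {..?n} (\<lambda>j. {..?n - j}). G j k) = (\<Sum>j\<le>?n. \<Sum>k\<le>?n - j. G j k)"
    by (rule sum.Sigma[symmetric]) auto
  finally show "pmult t (pmult t x y) z (v, w) = pmult t x (pmult t y z) (v, w)" using L R by simp
qed

lemma take_drop_eq_iff:
  "i \<le> length w'' \<Longrightarrow> (take i w'' = w \<and> drop i w'' = w') \<longleftrightarrow> (i = length w \<and> w'' = w @ w')"
proof
  assume i: "i \<le> length w''" and h: "take i w'' = w \<and> drop i w'' = w'"
  then have "w'' = w @ w'" by (metis append_take_drop_id)
  moreover have "length w = i" using h i by (metis length_take min.absorb2)
  ultimately show "i = length w \<and> w'' = w @ w'" by simp
next
  assume "i = length w \<and> w'' = w @ w'"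
  then show "take i w'' = w \<and> drop i w'' = w'" by simp
qed

lemma pmult_pbasis:
  "pmult t (pbasis (v,w)) (pbasis (u,w')) = (if u = pend t (v,w) then pbasis (v, w@w') else 0)"
proof (rule ext, clarify)
  fix v' w''
  have "pmult t (pbasis (v,w)) (pbasis (u,w')) (v', w'') =
     (\<Sum>i\<le>length w''. if i = length w then (if v' = v \<and> w'' = w @ w' \<and> u = pend t (v,w) then 1 else 0)
        else 0)"
    unfolding pmult_def
  proof (simp only: prod.case, rule sum.cong[OF refl])
    fix i assume "i \<in> {..length w''}"
    then have i: "i \<le> length w''" by simp
    show "pbasis (v, w) (v', take i w'') * pbasis (u, w') (pend t (v', take i w''), drop i w'') =
      (if i = length w then (if v' = v \<and> w'' = w @ w' \<and> u = pend t (v,w) then 1 else 0) else 0)"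
    proof (cases "take i w'' = w \<and> drop i w'' = w'")
      case True
      then have "i = length w" "w'' = w @ w'" using take_drop_eq_iff[OF i, of w w'] by auto
      then show ?thesis using True by (simp add: pbasis_def)
    next
      case False
      then have "\<not> (i = length w \<and> w'' = w @ w')" using take_drop_eq_iff[OF i, of w w']
        by blast
      then show ?thesis using False unfolding pbasis_def by auto
    qed
  qed
  also have "\<dots> = (if u = pend t (v,w) then pbasis (v, w@w') else 0) (v', w'')"
    by (simp add: pbasis_def)
  finally show "pmult t (pbasis (v,w)) (pbasis (u,w')) (v', w'') =
     (if u = pend t (v,w) then pbasis (v, w@w') else 0) (v', w'')" .
qed

lemma pbasis_append: "pbasis (v, w1 @ w2) = pmult t (pbasis (v, w1)) (pbasis (pend t (v, w1), w2))"
  by (simp add: pmult_pbasis)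

lemma pmult_vertex_left:
  "pmult t (pbasis (v,[])) x = (\<lambda>(u,w). if u = v then x (u,w) else 0)"
proof (rule ext, clarify)
  fix u w
  have "pmult t (pbasis (v,[])) x (u,w)
      = (\<Sum>i\<le>length w. if i = 0 then (if u = v then x (u,w) else 0) else 0)"
    unfolding pmult_def by (simp only: prod.case, intro sum.cong) (auto simp: pbasis_def)
  then show "pmult t (pbasis (v,[])) x (u,w) = (if u = v then x (u,w) else 0)" by simp
qed

lemma pmult_vertex_right:
  "pmult t x (pbasis (v,[])) = (\<lambda>p. if pend t p = v then x p else 0)"
proof (rule ext, clarify)
  fix u w
  have "pmult t x (pbasis (v,[])) (u,w)
      = (\<Sum>i\<le>length w. if i = length w then (if pend t (u,w) = v then x (u,w) else 0) else 0)"
    unfolding pmult_def by (simp only: prod.case, intro sum.cong) (auto simp: pbasis_def)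
  then show "pmult t x (pbasis (v,[])) (u,w) = (if pend t (u,w) = v then x (u,w) else 0)" by simp
qed

lemma pmult_nonzero_split:
  assumes "pmult t x y (v, w) \<noteq> 0"
  shows "\<exists>i\<le>length w. x (v, take i w) \<noteq> 0 \<and> y (pend t (v, take i w), drop i w) \<noteq> 0"
proof -
  from assms obtain i where "i
      \<in> {..length w}" "x (v, take i w) * y (pend t (v, take i w), drop i w) \<noteq> 0"
    unfolding pmult_def by (auto elim: sum.not_neutral_contains_not_neutral)
  then show ?thesis by auto
qed

definition fsupp :: "('b \<Rightarrow> 'k::zero) \<Rightarrow> bool" where
  "fsupp x \<longleftrightarrow> finite {p. x p \<noteq> 0}"

lemma fsupp_pbasis [simp]: "fsupp (pbasis p)"
  unfolding fsupp_def by (rule finite_subset[of _ "{p}"]) (auto simp: pbasis_def)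

lemma fsupp_zero [simp]: "fsupp 0"
  by (simp add: fsupp_def)

lemma fsupp_add [simp]: "fsupp x \<Longrightarrow> fsupp y \<Longrightarrow> fsupp (x + (y::'b \<Rightarrow> 'k::field))"
  unfolding fsupp_def
  by (rule finite_subset[of _ "{p. x p \<noteq> 0} \<union> {p. y p \<noteq> 0}"]) auto

lemma fsupp_diff [simp]: "fsupp x \<Longrightarrow> fsupp y \<Longrightarrow> fsupp (x - (y::'b \<Rightarrow> 'k::ab_group_add))"
  unfolding fsupp_def
  by (rule finite_subset[of _ "{p. x p \<noteq> 0} \<union> {p. y p \<noteq> 0}"]) auto

lemma fsupp_K [simp]: "fsupp x \<Longrightarrow> fsupp (K c * (x::'b \<Rightarrow> 'k::field))"
  unfolding fsupp_def by (rule finite_subset[of _ "{p. x p \<noteq> 0}"]) auto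

lemma fsupp_scale [simp]: "fsupp x \<Longrightarrow> fsupp (\<lambda>r. c * (x r::'k::field))"
  using fsupp_K[of x c] by (simp add: times_fun_def)

lemma fsupp_pmult [simp]:
  assumes "fsupp x" "fsupp y"
  shows "fsupp (pmult t x y)"
proof -
  have "{p. pmult t x y p \<noteq> 0} \<subseteq>
      (\<lambda>(p, q). (fst p, snd p @ snd q)) ` ({p. x p \<noteq> 0} \<times> {q. y q \<noteq> 0})"
  proof clarify
    fix v w assume "pmult t x y (v, w) \<noteq> 0"
    from pmult_nonzero_split[OF this] obtain i where
      "i \<le> length w" "x (v, take i w) \<noteq> 0" "y (pend t (v, take i w), drop i w) \<noteq> 0"
      by blast
    then show "(v, w) \<in> (\<lambda>(p, q). (fst p, snd p @ snd q)) ` ({p. x p \<noteq> 0} \<times> {q. y q \<noteq> 0})"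
      by (intro image_eqI[of _ _ "((v, take i w), (pend t (v, take i w), drop i w))"]) auto
  qed
  then show ?thesis
    using assms unfolding fsupp_def by (meson finite_SigmaI finite_imageI finite_subset)
qed

lemma fsupp_sum:
  "finite S \<Longrightarrow> (\<And>i. i \<in> S \<Longrightarrow> fsupp (g i)) \<Longrightarrow> fsupp (\<lambda>r. \<Sum>i\<in>S. (g i r :: 'k::field))"
proof (induction S rule: finite_induct)
  case empty
  then show ?case by (simp add: fsupp_def)
next
  case (insert a S)
  have "(\<lambda>r. \<Sum>i\<in>insert a S. g i r) = g a + (\<lambda>r. \<Sum>i\<in>S. g i r)"
    using insert by (auto simp: fun_eq_iff)
  then show ?case using insert by simp
qed

lemma fsupp_basis_expansion:
  assumes "finite T" "{p. x p \<noteq> 0} \<subseteq> T"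
  shows "x = (\<lambda>r. \<Sum>p\<in>T. x p * pbasis p r)"
proof (rule ext)
  fix r
  have "(\<Sum>p\<in>T. x p * pbasis p r) = (\<Sum>p\<in>T. if p = r then x r else 0)"
    by (rule sum.cong) (auto simp: pbasis_def)
  also have "\<dots> = x r"
    using assms by (auto simp: sum.delta')
  finally show "x r = (\<Sum>p\<in>T. x p * pbasis p r)" by simp
qed

lemma valid_path_append:
  assumes v1: "valid_path Q0 Q1 s t (v, w1)" and v2: "valid_path Q0 Q1 s t (pend t (v, w1), w2)"
  shows "valid_path Q0 Q1 s t (v, w1 @ w2)"
  unfolding valid_path_def fst_conv snd_conv
proof (intro conjI allI impI)
  show "v \<in> Q0" "set (w1 @ w2) \<subseteq> Q1"
    using v1 v2 by (simp_all add: valid_path_def)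
  show "s (hd (w1 @ w2)) = v" if "w1 @ w2 \<noteq> []"
    using v1 v2 that by (cases w1) (auto simp: valid_path_def)
  fix i assume i: "Suc i < length (w1 @ w2)"
  consider "Suc i < length w1" | "Suc i = length w1" | "length w1 \<le> i"
    by linarith
  then show "t ((w1 @ w2) ! i) = s ((w1 @ w2) ! Suc i)"
  proof cases
    case 1
    then show ?thesis using v1 by (simp add: valid_path_def nth_append)
  next
    case 2
    then have ne: "w1 \<noteq> []" "w2 \<noteq> []" using i by auto
    have "(w1 @ w2) ! i = last w1"
      using 2 ne by (simp add: nth_append last_conv_nth flip: 2)
    moreover have "(w1 @ w2) ! Suc i = hd w2"
      using 2 ne by (simp add: nth_append hd_conv_nth)
    moreover have "s (hd w2) = t (last w1)"
      using v2 ne by (simp add: valid_path_def pend_def)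
    ultimately show ?thesis by simp
  next
    case 3
    then have "Suc (i - length w1) < length w2" "Suc i - length w1 = Suc (i - length w1)"
      using i by auto
    then show ?thesis
      using v2 3 by (simp add: valid_path_def nth_append)
  qed
qed

lemma valid_path_take:
  "valid_path Q0 Q1 s t (v, w) \<Longrightarrow> valid_path Q0 Q1 s t (v, take i w)"
  unfolding valid_path_def by (auto dest: in_set_takeD simp: hd_take)

lemma valid_path_pend:
  assumes "valid_path Q0 Q1 s t (v, w)" "\<forall>a\<in>Q1. t a \<in> Q0"
  shows "pend t (v, w) \<in> Q0"
proof (cases "w = []")
  case False
  then have "last w \<in> Q1" using assms(1) last_in_set[OF False] by (auto simp: valid_path_def)
  then show ?thesis using assms(2) False by (simp add: pend_def)
qed (use assms in \<open>auto simp: valid_path_def\<close>)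

lemma valid_path_drop:
  assumes v: "valid_path Q0 Q1 s t (v, w)" and tQ: "\<forall>a\<in>Q1. t a \<in> Q0"
  shows "valid_path Q0 Q1 s t (pend t (v, take i w), drop i w)"
  unfolding valid_path_def fst_conv snd_conv
proof (intro conjI allI impI)
  show "pend t (v, take i w) \<in> Q0"
    using valid_path_pend[OF valid_path_take[OF v] tQ] .
  show "set (drop i w) \<subseteq> Q1"
    using v by (auto simp: valid_path_def dest: in_set_dropD)
  show "s (hd (drop i w)) = pend t (v, take i w)" if "drop i w \<noteq> []"
  proof (cases "i = 0")
    case True
    then show ?thesis using v that by (simp add: valid_path_def)
  next
    case False
    then have "take i w \<noteq> []" "i < length w" using that by auto
    then have "pend t (v, take i w) = t (w ! (i - 1))"
      by (simp add: pend_def last_conv_nth)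
    moreover have "t (w ! (i - 1)) = s (w ! Suc (i - 1))"
      using v \<open>i < length w\<close> False by (simp add: valid_path_def)
    ultimately show ?thesis using False that by (simp add: hd_drop_conv_nth)
  qed
  fix j assume "Suc j < length (drop i w)"
  then show "t (drop i w ! j) = s (drop i w ! Suc j)"
    using v by (auto simp: valid_path_def)
qed

lemma valid_path_split:
  assumes "valid_path Q0 Q1 s t (v, w1 @ w2)" "\<forall>a\<in>Q1. t a \<in> Q0"
  shows "valid_path Q0 Q1 s t (v, w1)" "valid_path Q0 Q1 s t (pend t (v, w1), w2)"
  using valid_path_take[OF assms(1), of "length w1"] valid_path_drop[OF assms, of "length w1"]
  by simp_all

lemma valid_path_single: "a \<in> Q1 \<Longrightarrow> s a \<in> Q0 \<Longrightarrow> valid_path Q0 Q1 s t (s a, [a])"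
  by (simp add: valid_path_def)

lemma valid_path_replicate:
  "a \<in> Q1 \<Longrightarrow> s a \<in> Q0 \<Longrightarrow> s a = t a \<Longrightarrow> valid_path Q0 Q1 s t (s a, replicate k a)"
  by (auto simp: valid_path_def hd_replicate set_replicate_conv_if)

lemma path_alg_iff:
  "x \<in> path_alg Q0 Q1 s t \<longleftrightarrow> fsupp x \<and> (\<forall>p. x p \<noteq> 0 \<longrightarrow> valid_path Q0 Q1 s t p)"
  by (simp add: path_alg_def fsupp_def)

lemma path_alg_fsupp: "x \<in> path_alg Q0 Q1 s t \<Longrightarrow> fsupp x"
  by (simp add: path_alg_iff)

lemma pbasis_in_path_alg: "valid_path Q0 Q1 s t p \<Longrightarrow> pbasis p \<in> path_alg Q0 Q1 s t"
  using fsupp_pbasis[of p] by (auto simp: path_alg_iff pbasis_def)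

lemma path_alg_add:
  "x \<in> path_alg Q0 Q1 s t \<Longrightarrow> y \<in> path_alg Q0 Q1 s t \<Longrightarrow> x + y \<in> path_alg Q0 Q1 s t"
  by (auto simp: path_alg_iff) (metis add.right_neutral add_0)

lemma path_alg_K: "x \<in> path_alg Q0 Q1 s t \<Longrightarrow> K c * x \<in> path_alg Q0 Q1 s t"
  by (auto simp: path_alg_iff)

lemma path_alg_scale: "x \<in> path_alg Q0 Q1 s t \<Longrightarrow> (\<lambda>r. c * x r) \<in> path_alg Q0 Q1 s t"
  using path_alg_K[of x Q0 Q1 s t c] by (simp add: times_fun_def)

lemma path_alg_pmult:
  assumes "x \<in> path_alg Q0 Q1 s t" "y \<in> path_alg Q0 Q1 s t" "\<forall>a\<in>Q1. t a \<in> Q0"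
  shows "pmult t x y \<in> path_alg Q0 Q1 s t"
  unfolding path_alg_iff
proof (intro conjI allI impI)
  show "fsupp (pmult t x y)"
    using assms by (simp add: path_alg_iff)
  fix p assume "pmult t x y p \<noteq> 0"
  then obtain v w where p: "p = (v, w)" and nz: "pmult t x y (v, w) \<noteq> 0"
    by (cases p) auto
  from pmult_nonzero_split[OF nz] obtain i where "i \<le> length w" "x (v, take i w) \<noteq> 0"
      "y (pend t (v, take i w), drop i w) \<noteq> 0"
    by blast
  then have "valid_path Q0 Q1 s t (v, take i w)"
      "valid_path Q0 Q1 s t (pend t (v, take i w), drop i w)"
    using assms by (auto simp: path_alg_iff)
  from valid_path_append[OF this] show "valid_path Q0 Q1 s t p"
    using p by simp
qed

lemma path_alg_sum:
  "finite S \<Longrightarrow> (\<And>i. i \<in> S \<Longrightarrow> g i \<in> path_alg Q0 Q1 s t) \<Longrightarrow>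
   (\<lambda>r. \<Sum>i\<in>S. g i r) \<in> path_alg Q0 Q1 s t"
proof (induction S rule: finite_induct)
  case empty
  then show ?case by (simp add: path_alg_iff fsupp_def)
next
  case (insert a S)
  have "(\<lambda>r. \<Sum>i\<in>insert a S. g i r) = g a + (\<lambda>r. \<Sum>i\<in>S. g i r)"
    using insert by (auto simp: fun_eq_iff)
  then show ?case using insert by (simp add: path_alg_add)
qed

lemma ideal_gen_add': "x \<in> ideal_gen A mul S \<Longrightarrow> y \<in> ideal_gen A mul S \<Longrightarrow> x + y \<in> ideal_gen A mul S"
  using ideal_gen.add[of x A mul S y] by (simp add: plus_fun_def)

lemma ideal_gen_K: "x \<in> ideal_gen A mul S \<Longrightarrow> K c * x \<in> ideal_gen A mul S"
  using ideal_gen.smult[of x A mul S c] by (simp add: times_fun_def K_def)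

lemma ideal_gen_0: "0 \<in> ideal_gen A mul S"
  using ideal_gen.zero[of A mul S] by (simp add: zero_fun_def)

lemma ideal_gen_uminus: "x \<in> ideal_gen A mul S \<Longrightarrow> - x \<in> ideal_gen A mul S"
  using ideal_gen_K[of x A mul S "-1"] by (simp add: times_fun_def fun_Compl_def)

lemma ideal_gen_diff: "x \<in> ideal_gen A mul S \<Longrightarrow> y \<in> ideal_gen A mul S \<Longrightarrow> x - y \<in> ideal_gen A mul S"
  using ideal_gen_add'[of x A mul S "- y"] ideal_gen_uminus by (metis diff_conv_add_uminus)

lemma ideal_gen_of_diff: "x - y \<in> ideal_gen A mul S \<Longrightarrow> y \<in> ideal_gen A mul S \<Longrightarrow> x \<in> ideal_gen A mul S"
  using ideal_gen_add'[of "x - y" A mul S y] by simp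

lemma ideal_gen_of_diff':
  "x - y \<in> ideal_gen A mul S \<Longrightarrow> x \<in> ideal_gen A mul S \<Longrightarrow> y \<in> ideal_gen A mul S"
  using ideal_gen_diff[of x A mul S "x - y"] by simp

lemma ideal_gen_of_diff_diff:
  fixes x y z :: "'b \<Rightarrow> 'k::field"
  assumes "x - y - z \<in> ideal_gen A mul S" "x \<in> ideal_gen A mul S" "z \<in> ideal_gen A mul S"
  shows "y \<in> ideal_gen A mul S"
proof -
  have "x - z - (x - y - z) \<in> ideal_gen A mul S"
    using ideal_gen_diff[OF ideal_gen_diff[OF assms(2,3)] assms(1)] .
  moreover have "x - z - (x - y - z) = y"
    by (simp add: algebra_simps)
  ultimately show ?thesis by simp
qed

lemma ideal_gen_K_cancel:
  assumes "K c * (x::'b \<Rightarrow> 'k::field) \<in> ideal_gen A mul S" "c \<noteq> 0"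
  shows "x \<in> ideal_gen A mul S"
proof -
  have "K (inverse c) * (K c * x) \<in> ideal_gen A mul S"
    using assms(1) by (rule ideal_gen_K)
  moreover have "K (inverse c) * (K c * x) = x"
    using assms(2) by (intro ext) simp
  ultimately show ?thesis by simp
qed

lemma ideal_gen_sum:
  "finite T \<Longrightarrow> (\<And>i. i \<in> T \<Longrightarrow> g i \<in> ideal_gen A mul S) \<Longrightarrow> (\<lambda>r. \<Sum>i\<in>T. g i r) \<in> ideal_gen A mul S"
proof (induction T rule: finite_induct)
  case empty
  then show ?case using ideal_gen_0 by (simp add: zero_fun_def)
next
  case (insert a T)
  have "(\<lambda>r. \<Sum>i\<in>insert a T. g i r) = g a + (\<lambda>r. \<Sum>i\<in>T. g i r)"
    using insert by (auto simp: fun_eq_iff)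
  then show ?case using insert by (simp add: ideal_gen_add')
qed

lemma ideal_gen_fsupp:
  assumes "x \<in> ideal_gen A (pmult t) S" "\<forall>y\<in>S. fsupp y" "\<forall>a\<in>A. fsupp a"
  shows "fsupp x"
  using assms(1)
proof (induction rule: ideal_gen.induct)
  case (add x y)
  then show ?case using fsupp_add[of x y] by (simp add: plus_fun_def)
next
  case (lmult a x)
  then show ?case using assms(3) by simp
next
  case (rmult a x)
  then show ?case using assms(3) by simp
qed (use assms(2) in \<open>auto simp: fsupp_def\<close>)

lemma fsupp_additive_sum:
  fixes \<phi> :: "('b \<Rightarrow> 'k::field) \<Rightarrow> ('b \<Rightarrow> 'k)"
  assumes add: "\<And>x y. fsupp x \<Longrightarrow> fsupp y \<Longrightarrow> \<phi> (x + y) = \<phi> x + \<phi> y"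
    and zero: "\<phi> 0 = 0"
  shows "finite T \<Longrightarrow> (\<And>i. i \<in> T \<Longrightarrow> fsupp (h i)) \<Longrightarrow>
    \<phi> (\<lambda>r. \<Sum>i\<in>T. h i r) = (\<lambda>r. \<Sum>i\<in>T. \<phi> (h i) r)"
proof (induction T rule: finite_induct)
  case empty
  then show ?case using zero by (simp add: zero_fun_def)
next
  case (insert a T)
  have sum: "(\<lambda>r. \<Sum>i\<in>insert a T. h i r) = h a + (\<lambda>r. \<Sum>i\<in>T. h i r)"
    using insert by (auto simp: fun_eq_iff)
  have "\<phi> (h a + (\<lambda>r. \<Sum>i\<in>T. h i r)) = \<phi> (h a) + \<phi> (\<lambda>r. \<Sum>i\<in>T. h i r)"
    using insert by (intro add fsupp_sum) auto
  also have "\<dots> = (\<lambda>r. \<Sum>i\<in>insert a T. \<phi> (h i) r)"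
    using insert by (auto simp: fun_eq_iff)
  finally show ?case
    unfolding sum .
qed

definition fs_alg_endo ::
    "('a \<Rightarrow> 'v) \<Rightarrow> (('v \<times> 'a list \<Rightarrow> 'k::field) \<Rightarrow> ('v \<times> 'a list \<Rightarrow> 'k)) \<Rightarrow> bool" where
  "fs_alg_endo t \<phi> \<longleftrightarrow>
     (\<forall>x. fsupp x \<longrightarrow> fsupp (\<phi> x)) \<and>
     (\<forall>x y. fsupp x \<longrightarrow> fsupp y \<longrightarrow> \<phi> (x + y) = \<phi> x + \<phi> y) \<and>
     (\<forall>c x. fsupp x \<longrightarrow> \<phi> (\<lambda>r. c * x r) = (\<lambda>r. c * \<phi> x r)) \<and>
     (\<forall>x y. fsupp x \<longrightarrow> fsupp y \<longrightarrow> \<phi> (pmult t x y) = pmult t (\<phi> x) (\<phi> y))"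

context
  fixes t :: "'a \<Rightarrow> 'v" and \<phi> :: "('v \<times> 'a list \<Rightarrow> 'k::field) \<Rightarrow> ('v \<times> 'a list \<Rightarrow> 'k)"
  assumes endo: "fs_alg_endo t \<phi>"
begin

lemma fs_alg_endo_add: "fsupp x \<Longrightarrow> fsupp y \<Longrightarrow> \<phi> (x + y) = \<phi> x + \<phi> y"
  and fs_alg_endo_scale: "fsupp x \<Longrightarrow> \<phi> (\<lambda>r. c * x r) = (\<lambda>r. c * \<phi> x r)"
  and fs_alg_endo_pmult: "fsupp x \<Longrightarrow> fsupp y \<Longrightarrow> \<phi> (pmult t x y) = pmult t (\<phi> x) (\<phi> y)"
  using endo unfolding fs_alg_endo_def by blast+

lemma fs_alg_endo_K: "fsupp x \<Longrightarrow> \<phi> (K c * x) = K c * \<phi> x"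
  using fs_alg_endo_scale[of x c] by (simp add: times_fun_def)

lemma fs_alg_endo_zero: "\<phi> 0 = 0"
  using fs_alg_endo_K[of 0 0] by (simp add: fsupp_def times_fun_def zero_fun_def)

lemma fs_alg_endo_diff:
  assumes "fsupp x" "fsupp y"
  shows "\<phi> (x - y) = \<phi> x - \<phi> y"
proof -
  have "\<phi> (x - y) = \<phi> (x + K (-1) * y)"
    by (rule arg_cong[where f = \<phi>]) (simp add: fun_eq_iff)
  also have "\<dots> = \<phi> x + K (-1) * \<phi> y"
    using assms by (simp add: fs_alg_endo_add fs_alg_endo_K del: K_apply)
  also have "\<dots> = \<phi> x - \<phi> y"
    by (simp add: fun_eq_iff)
  finally show ?thesis .
qed

lemma fs_alg_endo_ideal_gen:
  assumes closed: "\<forall>x\<in>path_alg Q0 Q1 s t. \<phi> x \<in> path_alg Q0 Q1 s t"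
    and gens: "\<forall>y\<in>S. fsupp y \<and> \<phi> y \<in> ideal_gen (path_alg Q0 Q1 s t) (pmult t) T"
    and x: "x \<in> ideal_gen (path_alg Q0 Q1 s t) (pmult t) S"
  shows "\<phi> x \<in> ideal_gen (path_alg Q0 Q1 s t) (pmult t) T"
  using x
proof (induction rule: ideal_gen.induct)
  case (base x)
  then show ?case using gens by blast
next
  case zero
  then show ?case using fs_alg_endo_zero ideal_gen_0 by (simp add: zero_fun_def)
next
  case (add x y)
  have "fsupp x" "fsupp y"
    using add.hyps gens by (auto intro: ideal_gen_fsupp simp: path_alg_fsupp)
  then show ?case
    using add.IH fs_alg_endo_add[of x y] ideal_gen_add' by (simp add: plus_fun_def)
next
  case (smult x c)
  have "fsupp x"
    using smult.hyps gens by (auto intro: ideal_gen_fsupp simp: path_alg_fsupp)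
  then show ?case
    using smult.IH fs_alg_endo_scale by (simp add: ideal_gen.smult)
next
  case (lmult a x)
  have "fsupp x"
    using lmult.hyps gens by (auto intro: ideal_gen_fsupp simp: path_alg_fsupp)
  then show ?case
    using lmult closed ideal_gen.lmult fs_alg_endo_pmult path_alg_fsupp by metis
next
  case (rmult a x)
  have "fsupp x"
    using rmult.hyps gens by (auto intro: ideal_gen_fsupp simp: path_alg_fsupp)
  then show ?case
    using rmult closed ideal_gen.rmult fs_alg_endo_pmult path_alg_fsupp by metis
qed

end

lemma fs_alg_endo_comp:
  assumes "fs_alg_endo t \<phi>" "fs_alg_endo t \<psi>"
  shows "fs_alg_endo t (\<phi> \<circ> \<psi>)"
  using assms unfolding fs_alg_endo_def by simp

text \<open>The trivial paths and the arrows generate the path algebra, so an endomorphism that is the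
  identity on them modulo an ideal is the identity modulo that ideal.\<close>

context
  fixes \<phi> :: "('v \<times> 'a list \<Rightarrow> 'k::field) \<Rightarrow> ('v \<times> 'a list \<Rightarrow> 'k)"
    and Q0 :: "'v set" and Q1 :: "'a set" and s t :: "'a \<Rightarrow> 'v" and S
  assumes endo: "fs_alg_endo t \<phi>"
    and ends: "\<forall>a\<in>Q1. s a \<in> Q0 \<and> t a \<in> Q0"
    and closed: "\<forall>x\<in>path_alg Q0 Q1 s t. \<phi> x \<in> path_alg Q0 Q1 s t"
    and vertex: "\<And>v. v \<in> Q0 \<Longrightarrow> \<phi> (pbasis (v, [])) = pbasis (v, [])"
    and arrow: "\<And>a. a \<in> Q1 \<Longrightarrow>
      \<phi> (pbasis (s a, [a])) - pbasis (s a, [a]) \<in> ideal_gen (path_alg Q0 Q1 s t) (pmult t) S"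
begin

lemma fs_alg_endo_congruent_id_pbasis:
  "valid_path Q0 Q1 s t (v, w) \<Longrightarrow>
    \<phi> (pbasis (v, w)) - pbasis (v, w) \<in> ideal_gen (path_alg Q0 Q1 s t) (pmult t) S"
proof (induction w arbitrary: v)
  case Nil
  then show ?case using vertex ideal_gen.zero by (simp add: valid_path_def)
next
  case (Cons a w)
  have a: "v = s a" "a \<in> Q1"
    using Cons.prems by (auto simp: valid_path_def)
  have vw: "valid_path Q0 Q1 s t (t a, w)"
    using valid_path_split(2)[of Q0 Q1 s t v "[a]" w] Cons.prems ends by simp
  have va: "valid_path Q0 Q1 s t (s a, [a])"
    using a ends by (simp add: valid_path_single)
  let ?X = "pbasis (s a, [a]) :: 'v \<times> 'a list \<Rightarrow> 'k"
  let ?Y = "pbasis (t a, w) :: 'v \<times> 'a list \<Rightarrow> 'k"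
  have aw: "pbasis (v, a # w) = pmult t ?X ?Y"
    using a by (simp add: pmult_pbasis)
  have "\<phi> (pbasis (v, a # w)) - pbasis (v, a # w) =
      pmult t (\<phi> ?X) (\<phi> ?Y - ?Y) + pmult t (\<phi> ?X - ?X) ?Y"
    unfolding aw fs_alg_endo_pmult[OF endo fsupp_pbasis fsupp_pbasis]
    by (simp add: pmult_diff_left pmult_diff_right)
  also have "\<dots> \<in> ideal_gen (path_alg Q0 Q1 s t) (pmult t) S"
    using closed pbasis_in_path_alg[OF va] pbasis_in_path_alg[OF vw]
    by (intro ideal_gen_add' ideal_gen.lmult[OF _ Cons.IH[OF vw]]
      ideal_gen.rmult[OF _ arrow[OF a(2)]])
      auto
  finally show ?case .
qed

lemma fs_alg_endo_congruent_id:
  assumes x: "x \<in> path_alg Q0 Q1 s t"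
  shows "\<phi> x - x \<in> ideal_gen (path_alg Q0 Q1 s t) (pmult t) S"
proof -
  let ?T = "{p. x p \<noteq> 0}"
  have fT: "finite ?T"
    using x by (simp add: path_alg_iff fsupp_def)
  have ex: "x = (\<lambda>r. \<Sum>p\<in>?T. x p * pbasis p r)"
    using fsupp_basis_expansion[OF fT, of x] by simp
  have "\<phi> x = (\<lambda>r. \<Sum>p\<in>?T. x p * \<phi> (pbasis p) r)"
    by (subst ex)
      (simp add: fsupp_additive_sum[OF fs_alg_endo_add[OF endo] fs_alg_endo_zero[OF endo] fT]
        fs_alg_endo_scale[OF endo])
  then have "\<phi> x - x = (\<lambda>r. \<Sum>p\<in>?T. x p * (\<phi> (pbasis p) - pbasis p) r)"
    by (subst (2) ex) (simp add: fun_eq_iff sum_subtractf algebra_simps)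
  also have "\<dots> \<in> ideal_gen (path_alg Q0 Q1 s t) (pmult t) S"
  proof (rule ideal_gen_sum[OF fT])
    fix p assume "p \<in> ?T"
    then have "valid_path Q0 Q1 s t p"
      using x unfolding path_alg_iff by (cases p) auto
    then have "\<phi> (pbasis p) - pbasis p \<in> ideal_gen (path_alg Q0 Q1 s t) (pmult t) S"
      using fs_alg_endo_congruent_id_pbasis by (cases p) auto
    then show "(\<lambda>r. x p * (\<phi> (pbasis p) - pbasis p) r) \<in> ideal_gen (path_alg Q0 Q1 s t) (pmult t) S"
      by (rule ideal_gen.smult)
  qed
  finally show ?thesis .
qed

end

lemma quot_alg_iso_of_inverse_endos:
  fixes Q0 :: "'v set" and Q1 :: "'a set" and s t :: "'a \<Rightarrow> 'v"
    and \<phi> \<psi> :: "('v \<times> 'a list \<Rightarrow> 'k::field) \<Rightarrow> ('v \<times> 'a list \<Rightarrow> 'k)"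
  defines "A \<equiv> path_alg Q0 Q1 s t"
  assumes endo: "fs_alg_endo t \<phi>"
    and closed: "\<forall>x\<in>A. \<phi> x \<in> A" "\<forall>x\<in>A. \<psi> x \<in> A"
    and unit: "\<phi> (punit Q0) = punit Q0"
    and into: "\<And>x. x \<in> I \<Longrightarrow> \<phi> x \<in> J" "\<And>x. x \<in> J \<Longrightarrow> \<psi> x \<in> I"
    and inverse: "\<And>x. x \<in> A \<Longrightarrow> \<phi> (\<psi> x) - x \<in> J" "\<And>x. x \<in> A \<Longrightarrow> \<psi> (\<phi> x) - x \<in> I"
    and ideals: "I = ideal_gen A (pmult t) S" "J = ideal_gen A (pmult t) T"
  shows "quot_alg_iso A (pmult t) (punit Q0) I J"
  unfolding quot_alg_iso_def
proof (intro exI[of _ \<phi>] conjI ballI allI)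
  fix x y assume "x \<in> A" "y \<in> A"
  then have xy: "fsupp x" "fsupp y"
    by (simp_all add: A_def path_alg_fsupp)
  show "\<phi> (\<lambda>p. x p + y p) = (\<lambda>p. \<phi> x p + \<phi> y p)"
    using fs_alg_endo_add[OF endo xy] by (simp add: plus_fun_def)
  show "(\<lambda>p. \<phi> (pmult t x y) p - pmult t (\<phi> x) (\<phi> y) p) \<in> J"
    using fs_alg_endo_pmult[OF endo xy] ideals ideal_gen.zero by simp
next
  fix c x assume "x \<in> A"
  then show "\<phi> (\<lambda>p. c * x p) = (\<lambda>p. c * \<phi> x p)"
    by (simp add: A_def path_alg_fsupp fs_alg_endo_scale[OF endo])
next
  show "(\<lambda>p. \<phi> (punit Q0) p - punit Q0 p) \<in> J"
    using unit ideals ideal_gen.zero by simp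
next
  fix x assume x: "x \<in> A"
  show "\<phi> x \<in> J \<longleftrightarrow> x \<in> I"
  proof
    assume "\<phi> x \<in> J"
    then have "\<psi> (\<phi> x) \<in> I"
      by (rule into(2))
    then show "x \<in> I"
      using ideal_gen_of_diff'[of "\<psi> (\<phi> x)" x] inverse(2)[OF x] ideals by simp
  qed (rule into(1))
next
  fix y assume y: "y \<in> A"
  show "\<exists>x\<in>A. (\<lambda>p. \<phi> x p - y p) \<in> J"
  proof
    show "(\<lambda>p. \<phi> (\<psi> y) p - y p) \<in> J"
      using inverse(1)[OF y] by (simp add: fun_diff_def)
  qed (use y closed in auto)
qed (use closed in auto)

section \<open>Substituting arrows by polynomials in themselves\<close>

text \<open>The endomorphism of the path algebra sending each arrow \<open>\<alpha>\<close> to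
  \<open>\<alpha> + \<mu>\<^sub>2 \<alpha>\<^sup>2 + \<mu>\<^sub>3 \<alpha>\<^sup>3\<close>; it is only used with \<open>\<mu>\<^sub>2, \<mu>\<^sub>3\<close> supported on loops.\<close>

locale loop_subst =
  fixes s t :: "'a \<Rightarrow> 'v" and mu2 mu3 :: "'a \<Rightarrow> 'k::field"
begin

definition subst_arrow :: "'a \<Rightarrow> 'v \<times> 'a list \<Rightarrow> 'k" where
  "subst_arrow a = pbasis (s a, [a]) + K (mu2 a) * pbasis (s a, [a, a])
     + K (mu3 a) * pbasis (s a, [a, a, a])"

primrec subst_word :: "'a list \<Rightarrow> 'v \<Rightarrow> 'v \<times> 'a list \<Rightarrow> 'k" where
  "subst_word [] v = pbasis (v, [])"
| "subst_word (a # w) v = (if v = s a then pmult t (subst_arrow a) (subst_word w (t a)) else 0)"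

definition subst_path :: "'v \<times> 'a list \<Rightarrow> 'v \<times> 'a list \<Rightarrow> 'k" where
  "subst_path p = subst_word (snd p) (fst p)"

definition subst :: "('v \<times> 'a list \<Rightarrow> 'k) \<Rightarrow> 'v \<times> 'a list \<Rightarrow> 'k" where
  "subst x = (\<lambda>r. \<Sum>q\<in>{q. x q \<noteq> 0}. x q * subst_path q r)"

lemma subst_path_Nil [simp]: "subst_path (v, []) = pbasis (v, [])"
  by (simp add: subst_path_def)

lemma subst_path_Cons:
  "subst_path (v, a # w) = (if v = s a then pmult t (subst_arrow a) (subst_path (t a, w)) else 0)"
  by (simp add: subst_path_def)

lemma subst_arrow_nonzero_start: "subst_arrow a (v', w') \<noteq> 0 \<Longrightarrow> v' = s a"
  by (auto simp: subst_arrow_def pbasis_def split: if_splits)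

lemma subst_path_nonzero_start: "subst_path (u, w) (v', w') \<noteq> 0 \<Longrightarrow> v' = u"
proof (induction w arbitrary: u v' w')
  case Nil
  then show ?case by (simp add: pbasis_def split: if_splits)
next
  case (Cons a w)
  then have u: "u = s a" and nz: "pmult t (subst_arrow a) (subst_path (t a, w)) (v', w') \<noteq> 0"
    by (auto simp: subst_path_Cons split: if_splits)
  from pmult_nonzero_split[OF nz] obtain i where "subst_arrow a (v', take i w') \<noteq> 0"
    by blast
  then show ?case using u subst_arrow_nonzero_start by blast
qed

lemma subst_path_pmult:
  "pmult t (subst_path (v, w1)) (subst_path (u, w2)) =
    (if u = pend t (v, w1) then subst_path (v, w1 @ w2) else 0)"
proof (induction w1 arbitrary: v)
  case Nil
  show ?case
  proof (rule ext, clarify)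
    fix v' w'
    show "pmult t (subst_path (v, [])) (subst_path (u, w2)) (v', w') =
        (if u = pend t (v, []) then subst_path (v, [] @ w2) else 0) (v', w')"
      using subst_path_nonzero_start[of u w2 v' w'] by (auto simp: pmult_vertex_left)
  qed
next
  case (Cons a w1)
  show ?case
  proof (cases "v = s a")
    case True
    then show ?thesis using Cons by (simp add: subst_path_Cons pmult_assoc)
  qed (simp add: subst_path_Cons zero_fun_def)
qed

lemma subst_eq_sum:
  assumes "finite T" "{p. x p \<noteq> 0} \<subseteq> T"
  shows "subst x = (\<lambda>r. \<Sum>q\<in>T. x q * subst_path q r)"
  unfolding subst_def using assms by (intro ext sum.mono_neutral_left) auto

lemma subst_zero: "subst 0 = 0"
  by (simp add: subst_def zero_fun_def)

lemma subst_add: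
  assumes "fsupp x" "fsupp y"
  shows "subst (x + y) = subst x + subst y"
proof -
  let ?T = "{p. x p \<noteq> 0} \<union> {p. y p \<noteq> 0}"
  have T: "finite ?T"
    using assms by (simp add: fsupp_def)
  have "subst (x + y) = (\<lambda>r. \<Sum>q\<in>?T. (x + y) q * subst_path q r)"
      "subst x = (\<lambda>r. \<Sum>q\<in>?T. x q * subst_path q r)"
      "subst y = (\<lambda>r. \<Sum>q\<in>?T. y q * subst_path q r)"
    by (rule subst_eq_sum[OF T]; auto)+
  then show ?thesis
    by (simp add: fun_eq_iff distrib_right sum.distrib)
qed

lemma subst_scale:
  assumes "fsupp x"
  shows "subst (\<lambda>r. c * x r) = (\<lambda>r. c * subst x r)"
proof -
  let ?T = "{p. x p \<noteq> 0}"
  have T: "finite ?T"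
    using assms by (simp add: fsupp_def)
  have "subst (\<lambda>r. c * x r) = (\<lambda>r. \<Sum>q\<in>?T. c * x q * subst_path q r)"
      "subst x = (\<lambda>r. \<Sum>q\<in>?T. x q * subst_path q r)"
    by (rule subst_eq_sum[OF T]; auto)+
  then show ?thesis
    by (simp add: fun_eq_iff sum_distrib_left mult.assoc)
qed

lemma subst_pbasis: "subst (pbasis p) = subst_path p"
proof -
  have "subst (pbasis p) = (\<lambda>r. \<Sum>q\<in>{p}. pbasis p q * subst_path q r)"
    by (rule subst_eq_sum) (auto simp: pbasis_def)
  then show ?thesis by (simp add: pbasis_def)
qed

lemma fsupp_subst_path: "fsupp (subst_path p)"
proof (cases p)
  case (Pair v w)
  show ?thesis unfolding Pair
    by (induction w arbitrary: v) (simp_all add: subst_path_Cons subst_arrow_def)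
qed

lemma fsupp_subst: "fsupp x \<Longrightarrow> fsupp (subst x)"
  unfolding subst_def by (intro fsupp_sum) (auto simp: fsupp_def[of x] fsupp_subst_path)

lemma subst_pmult:
  assumes x: "fsupp x" and y: "fsupp y"
  shows "subst (pmult t x y) = pmult t (subst x) (subst y)"
proof -
  let ?Sx = "{p. x p \<noteq> 0}" and ?Sy = "{p. y p \<noteq> 0}"
  have fx: "finite ?Sx" and fy: "finite ?Sy"
    using x y by (auto simp: fsupp_def)
  note sum = fsupp_additive_sum[OF subst_add subst_zero]
  have "pmult t x y = (\<lambda>r. \<Sum>p\<in>?Sx. \<Sum>q\<in>?Sy. (x p * y q) * pmult t (pbasis p) (pbasis q) r)"
    by (subst fsupp_basis_expansion[OF fx, of x], simp,
        subst fsupp_basis_expansion[OF fy, of y], simp, rule pmult_bilinear_sum)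
  then have "subst (pmult t x y) =
      (\<lambda>r. \<Sum>p\<in>?Sx. \<Sum>q\<in>?Sy. (x p * y q) * subst (pmult t (pbasis p) (pbasis q)) r)"
    using fx fy by (simp add: sum fsupp_sum subst_scale)
  also have "\<dots> = (\<lambda>r. \<Sum>p\<in>?Sx. \<Sum>q\<in>?Sy. (x p * y q) * pmult t (subst_path p) (subst_path q) r)"
    by (auto simp: pmult_pbasis subst_path_pmult subst_pbasis subst_zero intro!: sum.cong)
  also have "\<dots> = pmult t (\<lambda>r. \<Sum>p\<in>?Sx. x p * subst_path p r) (\<lambda>r. \<Sum>q\<in>?Sy. y q * subst_path q r)"
    by (rule pmult_bilinear_sum[symmetric])
  also have "\<dots> = pmult t (subst x) (subst y)"
    by (simp add: subst_def)
  finally show ?thesis .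
qed

lemma subst_fs_alg_endo: "fs_alg_endo t subst"
  unfolding fs_alg_endo_def by (simp add: fsupp_subst subst_add subst_scale subst_pmult)

lemma subst_K: "fsupp x \<Longrightarrow> subst (K c * x) = K c * subst x"
  by (rule fs_alg_endo_K[OF subst_fs_alg_endo])

lemma subst_diff: "fsupp x \<Longrightarrow> fsupp y \<Longrightarrow> subst (x - y) = subst x - subst y"
  by (rule fs_alg_endo_diff[OF subst_fs_alg_endo])

lemma subst_punit:
  assumes "finite Q0"
  shows "subst (punit Q0) = punit Q0"
proof -
  have T: "finite ((\<lambda>v. (v, [])) ` Q0)"
    using assms by simp
  have "subst (punit Q0) = (\<lambda>r. \<Sum>q\<in>(\<lambda>v. (v, [])) ` Q0. punit Q0 q * subst_path q r)"
    by (rule subst_eq_sum[OF T]) (auto simp: punit_def split: if_splits)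
  also have "\<dots> = (\<lambda>r. \<Sum>v\<in>Q0. pbasis (v, []) r)"
    by (subst sum.reindex) (auto simp: inj_on_def punit_def)
  also have "\<dots> = punit Q0"
  proof (rule ext, clarify)
    fix u w
    show "(\<Sum>v\<in>Q0. pbasis (v, []) (u, w)) = punit Q0 (u, w)"
      using assms
      by (cases "w = []") (simp_all add: pbasis_def punit_def sum.delta' eq_commute[of u])
  qed
  finally show ?thesis .
qed

lemma subst_arrow_in_path_alg:
  assumes "a \<in> Q1" "s a \<in> Q0" "mu2 a \<noteq> 0 \<or> mu3 a \<noteq> 0 \<Longrightarrow> s a = t a"
  shows "subst_arrow a \<in> path_alg Q0 Q1 s t"
proof (cases "s a = t a")
  case True
  have "valid_path Q0 Q1 s t (s a, replicate k a)" for k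
    using valid_path_replicate assms(1,2) True by metis
  from this[of 1] this[of 2] this[of 3] show ?thesis
    unfolding subst_arrow_def
    by (intro path_alg_add path_alg_K pbasis_in_path_alg) (simp_all add: numeral_eq_Suc)
next
  case False
  then have "mu2 a = 0" "mu3 a = 0"
    using assms(3) by auto
  then show ?thesis
    unfolding subst_arrow_def
    using pbasis_in_path_alg[OF valid_path_single[of a Q1 s Q0 t]] assms(1,2)
    by (simp add: K_def flip: zero_fun_def)
qed

lemma subst_in_path_alg:
  assumes ends: "\<forall>a\<in>Q1. s a \<in> Q0 \<and> t a \<in> Q0"
    and mu_nonzero_loop: "\<forall>a\<in>Q1. mu2 a \<noteq> 0 \<or> mu3 a \<noteq> 0 \<longrightarrow> s a = t a"
    and x: "x \<in> path_alg Q0 Q1 s t"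
  shows "subst x \<in> path_alg Q0 Q1 s t"
proof -
  have tQ: "\<forall>a\<in>Q1. t a \<in> Q0"
    using ends by blast
  have path: "subst_path (v, w) \<in> path_alg Q0 Q1 s t" if "valid_path Q0 Q1 s t (v, w)" for v w
    using that
  proof (induction w arbitrary: v)
    case Nil
    then show ?case by (simp add: pbasis_in_path_alg)
  next
    case (Cons a w)
    have a: "a \<in> Q1" "v = s a"
      using Cons.prems by (auto simp: valid_path_def)
    have "valid_path Q0 Q1 s t (t a, w)"
      using valid_path_split(2)[of Q0 Q1 s t v "[a]" w] Cons.prems tQ by simp
    moreover have "subst_arrow a \<in> path_alg Q0 Q1 s t"
      using a ends mu_nonzero_loop by (intro subst_arrow_in_path_alg) auto
    ultimately show ?case
      using Cons.IH a tQ by (simp add: subst_path_Cons path_alg_pmult del: subst_word.simps)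
  qed
  show ?thesis
    unfolding subst_def
  proof (rule path_alg_sum)
    show "finite {q. x q \<noteq> 0}"
      using x by (simp add: path_alg_iff fsupp_def)
    fix q assume "q \<in> {q. x q \<noteq> 0}"
    then have "valid_path Q0 Q1 s t q"
      using x unfolding path_alg_iff by (cases q) auto
    then have "subst_path q \<in> path_alg Q0 Q1 s t"
      using path by (cases q) simp
    then show "(\<lambda>r. x q * subst_path q r) \<in> path_alg Q0 Q1 s t"
      by (rule path_alg_scale)
  qed
qed

end

section \<open>Triangulation quivers\<close>

lemma funpow_cancel:
  assumes inj: "inj_on g X" and cl: "\<And>x. x \<in> X \<Longrightarrow> g x \<in> X" and a: "a \<in> X"
  shows "(g ^^ (i + k)) a = (g ^^ i) a \<Longrightarrow> (g ^^ k) a = a"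
proof (induction i)
  case 0 then show ?case by simp
next
  case (Suc i)
  have X: "\<And>j. (g ^^ j) a \<in> X"
  proof -
    fix j show "(g ^^ j) a \<in> X" by (induction j) (auto simp: a cl)
  qed
  from Suc.prems have "g ((g ^^ (i + k)) a) = g ((g ^^ i) a)" by simp
  then have "(g ^^ (i + k)) a = (g ^^ i) a" using inj X by (meson inj_onD)
  then show ?case by (rule Suc.IH)
qed

lemma funpow_period:
  assumes fin: "finite X" and inj: "inj_on g X" and cl: "\<And>x. x \<in> X \<Longrightarrow> g x \<in> X" and a: "a \<in> X"
  shows "\<exists>k>0. (g ^^ k) a = a"
proof -
  let ?h = "\<lambda>i. (g ^^ i) a"
  have X: "\<And>j. (g ^^ j) a \<in> X"
  proof -
    fix j show "(g ^^ j) a \<in> X" by (induction j) (auto simp: a cl)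
  qed
  have "\<not> inj_on ?h {0..card X}"
  proof
    assume "inj_on ?h {0..card X}"
    then have "card (?h ` {0..card X}) = card X + 1" by (simp add: card_image)
    moreover have "card (?h ` {0..card X}) \<le> card X" using X fin by (intro card_mono) auto
    ultimately show False by simp
  qed
  then obtain i j where ij: "i \<noteq> j" "?h i = ?h j" unfolding inj_on_def by blast
  show ?thesis
  proof (cases "i < j")
    case True
    then have "(g ^^ (i + (j - i))) a = (g ^^ i) a" using ij by simp
    from funpow_cancel[OF inj cl a this] show ?thesis using True by (intro exI[of _ "j - i"]) auto
  next
    case False
    then have "(g ^^ (j + (i - j))) a = (g ^^ j) a" using ij by simp
    from funpow_cancel[OF inj cl a this] show ?thesis using False ij
      by (intro exI[of _ "i - j"]) auto
  qed
qed

locale triangulation =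
  fixes Q0 :: "'v set" and Q1 :: "'a set" and s t :: "'a \<Rightarrow> 'v" and f :: "'a \<Rightarrow> 'a"
  assumes tq: "triangulation_quiver Q0 Q1 s t f"
begin

lemma finite_Q0: "finite Q0"
  and finite_Q1: "finite Q1"
  and arrow_ends: "\<And>a. a \<in> Q1 \<Longrightarrow> s a \<in> Q0 \<and> t a \<in> Q0"
  and out_degree: "\<And>i. i \<in> Q0 \<Longrightarrow> card {a\<in>Q1. s a = i} = 2"
  and in_degree: "\<And>i. i \<in> Q0 \<Longrightarrow> card {a\<in>Q1. t a = i} = 2"
  and connected: "\<And>i j. i \<in> Q0 \<Longrightarrow> j \<in> Q0
      \<Longrightarrow> (i, j) \<in> ({(s a, t a) |a. a \<in> Q1} \<union> {(t a, s a) |a. a \<in> Q1})\<^sup>*"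
  and f_bij: "bij_betw f Q1 Q1"
  and s_f: "\<And>a. a \<in> Q1 \<Longrightarrow> s (f a) = t a"
  and f_f_f: "\<And>a. a \<in> Q1 \<Longrightarrow> f (f (f a)) = a"
  using tq unfolding triangulation_quiver_def by auto

lemma f_in: "a \<in> Q1 \<Longrightarrow> f a \<in> Q1" using f_bij by (auto simp: bij_betw_def)

lemma f_inj: "a \<in> Q1 \<Longrightarrow> b \<in> Q1 \<Longrightarrow> f a = f b \<Longrightarrow> a = b"
  using f_bij by (auto simp: bij_betw_def dest: inj_onD)

lemma out_pair: assumes "a \<in> Q1" shows "\<exists>b. {x\<in>Q1. s x = s a} = {a, b} \<and> b \<noteq> a"
proof -
  have "card {x\<in>Q1. s x = s a} = 2" using out_degree arrow_ends assms by blast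
  then obtain x y where xy: "{x\<in>Q1. s x = s a} = {x, y}" "x \<noteq> y"
    by (auto simp: card_2_iff)
  then have "a \<in> {x, y}" using assms by blast
  then show ?thesis using xy by (auto simp: insert_commute)
qed

lemma bar_props: assumes "a \<in> Q1"
  shows "bar Q1 s a \<in> Q1" "s (bar Q1 s a) = s a" "bar Q1 s a \<noteq> a"
    "\<And>x. x \<in> Q1 \<Longrightarrow> s x = s a \<Longrightarrow> x = a \<or> x = bar Q1 s a"
proof -
  obtain b where b: "{x\<in>Q1. s x = s a} = {a, b}" "b \<noteq> a" using out_pair[OF assms]
    by blast
  have "b \<in> Q1" "s b = s a" using b by blast+
  have "bar Q1 s a = b" unfolding bar_def
  proof (rule the_equality)
    show "b \<in> Q1 \<and> s b = s a \<and> b \<noteq> a" using b by blast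
    fix x assume "x \<in> Q1 \<and> s x = s a \<and> x \<noteq> a" then show "x = b" using b
      by blast
  qed
  then show "bar Q1 s a \<in> Q1" "s (bar Q1 s a) = s a" "bar Q1 s a \<noteq> a"
    "\<And>x. x \<in> Q1 \<Longrightarrow> s x = s a \<Longrightarrow> x = a \<or> x = bar Q1 s a"
      using b by blast+
qed

lemma bar_bar: "a \<in> Q1 \<Longrightarrow> bar Q1 s (bar Q1 s a) = a"
  using bar_props[of a] bar_props[of "bar Q1 s a"] by metis

lemma bar_inj: "a \<in> Q1 \<Longrightarrow> b \<in> Q1 \<Longrightarrow> bar Q1 s a = bar Q1 s b \<Longrightarrow> a = b"
  using bar_bar by metis

abbreviation g where "g \<equiv> gperm Q1 s f"

lemma g_eq: "g a = bar Q1 s (f a)" by (simp add: gperm_def)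

lemma g_in: "a \<in> Q1 \<Longrightarrow> g a \<in> Q1" by (simp add: g_eq bar_props f_in)

lemma s_g: "a \<in> Q1 \<Longrightarrow> s (g a) = t a" by (simp add: g_eq bar_props f_in s_f)

lemma g_inj: "a \<in> Q1 \<Longrightarrow> b \<in> Q1 \<Longrightarrow> g a = g b \<Longrightarrow> a = b"
  by (simp add: g_eq) (meson bar_inj f_in f_inj)

lemma gpow_in: "a \<in> Q1 \<Longrightarrow> (g ^^ k) a \<in> Q1"
  by (induction k) (auto simp: g_in)

lemma orbsize_pos: "a \<in> Q1 \<Longrightarrow> 0 < orbsize Q1 s f a"
  and gpow_orbsize: "a \<in> Q1 \<Longrightarrow> (g ^^ orbsize Q1 s f a) a = a"
proof -
  assume a: "a \<in> Q1"
  have "\<exists>k>0. (g ^^ k) a = a"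
    by (rule funpow_period[OF finite_Q1 _ _ a]) (auto simp: inj_on_def g_inj g_in)
  then show "0 < orbsize Q1 s f a" "(g ^^ orbsize Q1 s f a) a = a"
    using LeastI_ex[of "\<lambda>k. 0 < k \<and> (g ^^ k) a = a"] unfolding orbsize_def by auto
qed

lemma gpow_mult_orbsize: assumes "a \<in> Q1" shows "(g ^^ (j * orbsize Q1 s f a)) a = a"
proof (induction j)
  case 0 then show ?case by simp
next
  case (Suc j)
  have "(g ^^ (Suc j * orbsize Q1 s f a)) a
      = (g ^^ orbsize Q1 s f a) ((g ^^ (j * orbsize Q1 s f a)) a)"
    by (simp add: funpow_add)
  then show ?case using gpow_orbsize[OF assms] Suc by simp
qed

lemma concat_replicate_gcycle: assumes "a \<in> Q1"
  shows "concat (replicate j (gcycle Q1 s f a)) = map (\<lambda>k. (g ^^ k) a) [0..<j * orbsize Q1 s f a]"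
proof (induction j)
  case 0 then show ?case by simp
next
  case (Suc j)
  let ?n = "orbsize Q1 s f a"
  have "concat (replicate (Suc j) (gcycle Q1 s f a))
      = concat (replicate j (gcycle Q1 s f a)) @ gcycle Q1 s f a"
    by (simp add: replicate_append_same[symmetric])
  also have "\<dots> = map (\<lambda>k. (g ^^ k) a) [0..<j * ?n] @ map (\<lambda>k. (g ^^ k) a) [0..<?n]"
    using Suc by (simp add: gcycle_def)
  also have "map (\<lambda>k. (g ^^ k) a) [0..<?n] = map (\<lambda>k. (g ^^ k) a) [j * ?n..<j * ?n + ?n]"
  proof -
    have "map (\<lambda>k. (g ^^ k) a) [j * ?n..<j * ?n + ?n] = map (\<lambda>k. (g ^^ (j * ?n + k)) a) [0..<?n]"
      by (simp add: map_add_upt[symmetric] add.commute)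
    also have "\<dots> = map (\<lambda>k. (g ^^ k) a) [0..<?n]"
      using gpow_mult_orbsize[OF assms, of j]
      by (simp add: funpow_add add.commute[of "j * ?n"])
    finally show ?thesis by simp
  qed
  also have "map (\<lambda>k. (g ^^ k) a) [0..<j * ?n] @ map (\<lambda>k. (g ^^ k) a) [j * ?n..<j * ?n + ?n]
      = map (\<lambda>k. (g ^^ k) a) [0..<Suc j * ?n]"
  proof -
    have "[0..<Suc j * ?n] = [0..<j * ?n] @ [j * ?n..<j * ?n + ?n]"
      using upt_add_eq_append[of 0 "j*?n" ?n] by (simp add: add.commute)
    then show ?thesis by simp
  qed
  finally show ?case .
qed

lemma gpow_mult_orbsize_add: assumes "a
    \<in> Q1" shows "(g ^^ (j * orbsize Q1 s f a + k)) a = (g ^^ k) a"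
  using gpow_mult_orbsize[OF assms, of j] by (simp add: funpow_add add.commute[of _ k])

lemma Bpath_eq_map_gen: assumes "a \<in> Q1"
  shows "Bpath Q1 s f m a = map (\<lambda>k. (g ^^ k) a) [0..<m a * orbsize Q1 s f a]"
  by (simp add: Bpath_def concat_replicate_gcycle[OF assms])

lemma Apath_eq_map_gen: assumes "a \<in> Q1" "0 < m a"
  shows "Apath Q1 s f m a = map (\<lambda>k. (g ^^ k) a) [0..<m a * orbsize Q1 s f a - 1]"
proof -
  let ?n = "orbsize Q1 s f a" and ?h = "\<lambda>k. (g ^^ k) a"
  have n: "0 < ?n" using orbsize_pos[OF assms(1)] .
  have "take (?n - 1) (gcycle Q1 s f a) = map ?h [0..<?n - 1]"
    by (simp add: gcycle_def take_map)
  also have "\<dots> = map (\<lambda>k. ?h ((m a - 1) * ?n + k)) [0..<?n - 1]"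
    by (simp add: gpow_mult_orbsize_add[OF assms(1)])
  also have "\<dots> = map ?h [(m a - 1) * ?n..<(m a - 1) * ?n + (?n - 1)]"
    by (simp add: map_add_upt[symmetric] add.commute)
  finally have 1: "take (?n - 1) (gcycle Q1 s f a)
      = map ?h [(m a - 1) * ?n..<(m a - 1) * ?n + (?n - 1)]" .
  have 2: "(m a - 1) * ?n + (?n - 1) = m a * ?n - 1" using n assms(2)
    by (cases "m a") (auto simp: algebra_simps)
  have "Apath Q1 s f m a
      = map ?h [0..<(m a - 1) * ?n] @ map ?h [(m a - 1) * ?n..<(m a - 1) * ?n + (?n - 1)]"
    unfolding Apath_def concat_replicate_gcycle[OF assms(1)] 1 by simp
  also have "\<dots> = map ?h [0..<(m a - 1) * ?n + (?n - 1)]"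
    using upt_add_eq_append[of 0 "(m a - 1) * ?n" "?n - 1"] by simp
  finally show ?thesis using 2 by simp
qed

lemma valid_path_gpow: assumes "a \<in> Q1" "0 < n"
  shows "valid_path Q0 Q1 s t (s a, map (\<lambda>k. (g ^^ k) a) [0..<n])"
  unfolding valid_path_def using assms
  by (auto simp: arrow_ends gpow_in hd_map s_g)

lemma g_gpow_pred: "0 < k \<Longrightarrow> g ((g ^^ (k - 1)) x) = (g ^^ k) x"
  by (cases k) auto

lemma border_loopD: assumes "border_loop Q1 s t f a"
  shows "a \<in> Q1" "s a = t a" "f a = a" "g a = bar Q1 s a" "bar Q1 s a \<in> Q1"
  using assms bar_props[of a] by (auto simp: border_loop_def g_eq)

text \<open>Two border loops at one vertex would leave it without further in- or outgoing arrows,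
  so by connectedness it would be the only vertex.\<close>

lemma bar_not_border_loop:
  assumes bl: "border_loop Q1 s t f a" and two: "2 \<le> card Q0"
  shows "\<not> border_loop Q1 s t f (bar Q1 s a)"
proof
  assume bl2: "border_loop Q1 s t f (bar Q1 s a)"
  let ?b = "bar Q1 s a" and ?i = "s a"
  have a: "a \<in> Q1" "s a = t a" using border_loopD[OF bl] by auto
  have b: "?b \<in> Q1" "s ?b = ?i" "t ?b = ?i" "?b \<noteq> a" using bar_props[OF a(1)] bl2
    by (auto simp: border_loop_def)
  have i: "?i \<in> Q0" using arrow_ends a by blast
  have out: "\<And>x. x \<in> Q1 \<Longrightarrow> s x = ?i \<Longrightarrow> t x = ?i"
  proof -
    fix x assume x: "x \<in> Q1" "s x = ?i"
    then have "x = a \<or> x = ?b" using bar_props(4)[OF a(1)] by blast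
    then show "t x = ?i" using a b by auto
  qed
  have inc: "\<And>x. x \<in> Q1 \<Longrightarrow> t x = ?i \<Longrightarrow> s x = ?i"
  proof -
    fix x assume x: "x \<in> Q1" "t x = ?i"
    have "card {y\<in>Q1. t y = ?i} = 2" using in_degree i by blast
    moreover have "{a, ?b} \<subseteq> {y\<in>Q1. t y = ?i}" using a b by auto
    moreover have "card {a, ?b} = 2" using b by simp
    moreover have "finite {y\<in>Q1. t y = ?i}" using finite_Q1 by simp
    ultimately have "{y\<in>Q1. t y = ?i} = {a, ?b}"
      using card_subset_eq[of "{y\<in>Q1. t y = ?i}" "{a, ?b}"] by simp
    then have "x = a \<or> x = ?b" using x by blast
    then show "s x = ?i" using a b by auto
  qed
  have reach: "(?i, j) \<in> ({(s a, t a) |a. a \<in> Q1} \<union> {(t a, s a) |a. a \<in> Q1})\<^sup>* \<Longrightarrow> j = ?i" for j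
  proof (induction rule: rtrancl_induct)
    case base then show ?case by simp
  next
    case (step y z)
    then have y: "y = ?i" by simp
    from step(2) obtain x where "x \<in> Q1" "(y, z) = (s x, t x) \<or> (y, z) = (t x, s x)"
      by blast
    then show ?case using out[of x] inc[of x] y by auto
  qed
  have "Q0 \<subseteq> {?i}" using reach connected i by blast
  then have "card Q0 \<le> card {?i}" by (intro card_mono) auto
  then show False using two by simp
qed

abbreviation KQ where "KQ \<equiv> path_alg Q0 Q1 s t"

lemma t_in_Q0: "\<forall>a\<in>Q1. t a \<in> Q0" using arrow_ends by blast

lemma valid_path_prefix_suffix:
  assumes "valid_path Q0 Q1 s t (v, w1 @ w2)"
  shows "valid_path Q0 Q1 s t (v, w1)" "valid_path Q0 Q1 s t (pend t (v, w1), w2)"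
proof -
  show "valid_path Q0 Q1 s t (v, w1)" using valid_path_take[OF assms, of "length w1"] by simp
  show "valid_path Q0 Q1 s t (pend t (v, w1), w2)"
    using valid_path_drop[OF assms t_in_Q0, of "length w1"] by simp
qed

lemma pbasis_infix_in_ideal:
  assumes S: "zero_rels Q1 s f \<subseteq> S"
    and v: "valid_path Q0 Q1 s t (v, w1 @ w2 @ w3)"
    and z: "pbasis (pend t (v, w1), w2) \<in> ideal_gen KQ (pmult t) S"
  shows "pbasis (v, w1 @ w2 @ w3) \<in> ideal_gen KQ (pmult t) S"
proof -
  let ?v' = "pend t (v, w1)"
  have v1: "valid_path Q0 Q1 s t (v, w1)" and v2: "valid_path Q0 Q1 s t (?v', w2 @ w3)"
    using valid_path_prefix_suffix[OF v] by auto
  have v3: "valid_path Q0 Q1 s t (pend t (?v', w2), w3)" using valid_path_prefix_suffix[OF v2]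
    by auto
  have "pbasis (?v', w2 @ w3) = pmult t (pbasis (?v', w2)) (pbasis (pend t (?v', w2), w3))"
    by (rule pbasis_append)
  also have "\<dots> \<in> ideal_gen KQ (pmult t) S"
    by (rule ideal_gen.rmult[OF pbasis_in_path_alg[OF v3] z])
  finally have "pbasis (?v', w2 @ w3) \<in> ideal_gen KQ (pmult t) S" .
  then have "pmult t (pbasis (v, w1)) (pbasis (?v', w2 @ w3)) \<in> ideal_gen KQ (pmult t) S"
    by (rule ideal_gen.lmult[OF pbasis_in_path_alg[OF v1]])
  then show ?thesis by (metis pbasis_append)
qed

lemma zero_rel_in_ideal:
  assumes S: "zero_rels Q1 s f \<subseteq> S" and a: "a \<in> Q1"
  shows "pbasis (s a, [a, f a, g (f a)]) \<in> ideal_gen KQ (pmult t) S"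
  using S a by (auto simp: zero_rels_def intro!: ideal_gen.base)

lemma valid_path_zero_rel: "a \<in> Q1 \<Longrightarrow> valid_path Q0 Q1 s t (s a, [a, f a, g (f a)])"
  by (auto simp: valid_path_def arrow_ends f_in g_in s_f s_g nth_Cons split: nat.splits)
definition loop_pow :: "'a \<Rightarrow> nat \<Rightarrow> 'v \<times> 'a list \<Rightarrow> 'k::field" where
  "loop_pow x k = pbasis (s x, replicate k x)"

lemma valid_path_loop_pow: "border_loop Q1 s t f x \<Longrightarrow> valid_path Q0 Q1 s t (s x, replicate k x)"
  using border_loopD[of x] arrow_ends by (intro valid_path_replicate) auto

lemma loop_pow_in_KQ: "border_loop Q1 s t f x \<Longrightarrow> loop_pow x k \<in> KQ"
  by (simp add: loop_pow_def pbasis_in_path_alg valid_path_loop_pow)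

lemma loop_pow_mult:
  "border_loop Q1 s t f x \<Longrightarrow> pmult t (loop_pow x j) (loop_pow x k) = loop_pow x (j + k)"
proof -
  assume bl: "border_loop Q1 s t f x"
  have "pend t (s x, replicate j x) = s x" using border_loopD[OF bl]
    by (cases j) (auto simp: pend_def)
  then show ?thesis by (simp add: loop_pow_def pmult_pbasis replicate_add)
qed

lemma pend_replicate_loop: "border_loop Q1 s t f x \<Longrightarrow> pend t (s x, replicate j x) = s x"
  using border_loopD[of x] by (cases j) (auto simp: pend_def)

definition g_chain :: "'a list \<Rightarrow> bool" where
  "g_chain w \<longleftrightarrow> (\<forall>j. Suc j < length w \<longrightarrow> w ! Suc j = g (w ! j))"

lemma valid_path_g_chain:
  assumes "w \<noteq> []" "set w \<subseteq> Q1" "g_chain w"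
  shows "valid_path Q0 Q1 s t (s (hd w), w)"
  unfolding valid_path_def fst_conv snd_conv
proof (intro conjI allI impI)
  show "s (hd w) \<in> Q0" using assms arrow_ends hd_in_set by blast
  show "set w \<subseteq> Q1" by (fact assms(2))
  show "s (hd w) = s (hd w)" ..
  fix i assume i: "Suc i < length w"
  then have "w ! i \<in> Q1" using assms(2) nth_mem by (metis Suc_lessD subsetD)
  then show "t (w ! i) = s (w ! Suc i)" using assms(3) i by (simp add: g_chain_def s_g)
qed

end

locale weighted_triangulation = triangulation Q0 Q1 s t f
  for Q0 :: "'v set" and Q1 :: "'a set" and s t :: "'a \<Rightarrow> 'v" and f :: "'a \<Rightarrow> 'a" +
  fixes m :: "'a \<Rightarrow> nat" and c :: "'a \<Rightarrow> 'k::field"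
  assumes two_vertices: "2 \<le> card Q0"
    and wm: "weight_function Q1 s f m"
    and pc: "parameter_function Q1 s f c"
    and mn: "\<forall>a\<in>Q1. m a * orbsize Q1 s f a \<ge> 3"
begin

lemma m_pos: "a \<in> Q1 \<Longrightarrow> 0 < m a" using wm by (simp add: weight_function_def)
lemma c_nz: "a \<in> Q1 \<Longrightarrow> c a \<noteq> 0" using pc
  by (simp add: parameter_function_def)

abbreviation Blen where "Blen a \<equiv> m a * orbsize Q1 s f a"

lemma Apath_eq_map: "a \<in> Q1 \<Longrightarrow> Apath Q1 s f m a = map (\<lambda>k. (g ^^ k) a) [0..<Blen a - 1]"
  by (rule Apath_eq_map_gen[OF _ m_pos])

lemma Bpath_eq_map: "a \<in> Q1 \<Longrightarrow> Bpath Q1 s f m a = map (\<lambda>k. (g ^^ k) a) [0..<Blen a]"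
  by (rule Bpath_eq_map_gen)

lemma three_le_Blen: "a \<in> Q1 \<Longrightarrow> 3 \<le> Blen a" using mn by blast

lemma valid_path_Apath: "a \<in> Q1 \<Longrightarrow> valid_path Q0 Q1 s t (s a, Apath Q1 s f m a)"
proof -
  assume a: "a \<in> Q1"
  have "0 < Blen a - 1" using three_le_Blen[OF a] by linarith
  then show ?thesis unfolding Apath_eq_map[OF a] by (rule valid_path_gpow[OF a])
qed

lemma valid_path_Bpath: "a \<in> Q1 \<Longrightarrow> valid_path Q0 Q1 s t (s a, Bpath Q1 s f m a)"
proof -
  assume a: "a \<in> Q1"
  have "0 < Blen a" using three_le_Blen[OF a] by linarith
  then show ?thesis unfolding Bpath_eq_map[OF a] by (rule valid_path_gpow[OF a])
qed

lemma Apath_nth_Suc: "a \<in> Q1 \<Longrightarrow> Suc j < length (Apath Q1 s f m a) \<Longrightarrow>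
    Apath Q1 s f m a ! Suc j = g (Apath Q1 s f m a ! j)"
  by (simp add: Apath_eq_map)

lemma Bpath_nth_Suc: "a \<in> Q1 \<Longrightarrow> Suc j < length (Bpath Q1 s f m a) \<Longrightarrow>
    Bpath Q1 s f m a ! Suc j = g (Bpath Q1 s f m a ! j)"
  by (simp add: Bpath_eq_map)

lemma Apath_Cons: "a \<in> Q1 \<Longrightarrow> \<exists>r. Apath Q1 s f m a = a # r"
proof -
  assume a: "a \<in> Q1"
  have "0 < Blen a - 1" using mn a by auto
  then have "[0..<Blen a - 1] = 0 # [1..<Blen a - 1]" by (simp add: upt_rec)
  then show ?thesis by (simp add: Apath_eq_map[OF a])
qed

lemma last_Apath: "a \<in> Q1 \<Longrightarrow> last (Apath Q1 s f m a) = (g ^^ (Blen a - 2)) a"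
proof -
  assume a: "a \<in> Q1"
  have N: "0 < Blen a - 1" using three_le_Blen[OF a] by linarith
  have "last (map (\<lambda>k. (g ^^ k) a) [0..<Blen a - 1]) = (g ^^ (Blen a - 1 - 1)) a"
    using N by (simp add: last_map)
  moreover have "Blen a - 1 - 1 = Blen a - 2" by simp
  ultimately show ?thesis by (simp add: Apath_eq_map[OF a])
qed

lemma gpow_Blen: "a \<in> Q1 \<Longrightarrow> (g ^^ Blen a) a = a"
  using gpow_mult_orbsize[of a "m a"] by simp

lemma border_loop_Bpath_bar: assumes bl: "border_loop Q1 s t f al"
  shows "(g ^^ (Blen (bar Q1 s al) - 1)) (bar Q1 s al) = al"
    "Bpath Q1 s f m (bar Q1 s al) = Apath Q1 s f m (bar Q1 s al) @ [al]"
    "\<not> border_loop Q1 s t f (last (Apath Q1 s f m (bar Q1 s al)))"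
proof -
  let ?b = "bar Q1 s al"
  have al: "al \<in> Q1" "g al = ?b" "?b \<in> Q1" using border_loopD[OF bl] by auto
  have B3: "3 \<le> Blen ?b" using mn al by auto
  have "g ((g ^^ (Blen ?b - 1)) ?b) = (g ^^ Blen ?b) ?b"
    by (rule g_gpow_pred) (use B3 in linarith)
  also have "\<dots> = ?b" using gpow_Blen al by blast
  finally have "g ((g ^^ (Blen ?b - 1)) ?b) = g al" using al by simp
  then show 1: "(g ^^ (Blen ?b - 1)) ?b = al" using g_inj gpow_in al by blast
  have "[0..<Blen ?b] = [0..<Blen ?b - 1] @ [Blen ?b - 1]"
  proof -
    obtain k where "Blen ?b = Suc k" using B3 by (cases "Blen ?b") auto
    then show ?thesis by simp
  qed
  then show "Bpath Q1 s f m ?b = Apath Q1 s f m ?b @ [al]"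
    using 1 al by (simp add: Apath_eq_map Bpath_eq_map)
  show "\<not> border_loop Q1 s t f (last (Apath Q1 s f m ?b))"
  proof
    assume bl2: "border_loop Q1 s t f (last (Apath Q1 s f m ?b))"
    let ?d = "last (Apath Q1 s f m ?b)"
    have "g ?d = (g ^^ (Blen ?b - 1)) ?b"
    proof -
      have "?d = (g ^^ (Blen ?b - 2)) ?b" using last_Apath al by blast
      moreover have "Blen ?b - 2 = Blen ?b - 1 - 1" by simp
      moreover have "g ((g ^^ (Blen ?b - 1 - 1)) ?b) = (g ^^ (Blen ?b - 1)) ?b"
        by (rule g_gpow_pred) (use B3 in linarith)
      ultimately show ?thesis by simp
    qed
    then have "bar Q1 s ?d = al" using 1 border_loopD[OF bl2] by simp
    then have "?d = ?b" using bar_bar border_loopD[OF bl2] by metis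
    then show False using bar_not_border_loop[OF bl two_vertices] bl2 by simp
  qed
qed

lemma g_f_eq_last_Apath_bar: assumes a: "a \<in> Q1"
    and bl: "border_loop Q1 s t f (last (Apath Q1 s f m (bar Q1 s a)))"
  shows "g (f a) = last (Apath Q1 s f m (bar Q1 s a))"
proof -
  let ?b = "bar Q1 s a" let ?d = "last (Apath Q1 s f m ?b)"
  have b: "?b \<in> Q1" using bar_props a by blast
  have B3: "3 \<le> Blen ?b" using mn b by auto
  have "g (g ?d) = (g ^^ Blen ?b) ?b"
  proof -
    have "?d = (g ^^ (Blen ?b - 2)) ?b" using last_Apath b by blast
    moreover have "Blen ?b - 2 = Blen ?b - 1 - 1" by simp
    moreover have "g ((g ^^ (Blen ?b - 1 - 1)) ?b) = (g ^^ (Blen ?b - 1)) ?b"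
      by (rule g_gpow_pred) (use B3 in linarith)
    moreover have "g ((g ^^ (Blen ?b - 1)) ?b) = (g ^^ Blen ?b) ?b"
      by (rule g_gpow_pred) (use B3 in linarith)
    ultimately show ?thesis by simp
  qed
  also have "\<dots> = ?b" using gpow_Blen b by blast
  finally have "g (bar Q1 s ?d) = ?b" using border_loopD[OF bl] by simp
  then have "bar Q1 s (f (bar Q1 s ?d)) = bar Q1 s a" by (simp add: g_eq)
  then have fd: "f (bar Q1 s ?d) = a" using bar_inj a f_in border_loopD[OF bl] by metis
  have "g (f a) = bar Q1 s (f (f (f (bar Q1 s ?d))))" using fd by (simp add: g_eq)
  also have "\<dots> = ?d" using f_f_f border_loopD[OF bl] bar_bar by simp
  finally show ?thesis .
qed

end
context weighted_triangulation
begin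

definition comm_rel :: "'a \<Rightarrow> 'v \<times> 'a list \<Rightarrow> 'k" where
  "comm_rel a = pbasis (s a, [a, f a])
     - K (c (bar Q1 s a)) * pbasis (s (bar Q1 s a), Apath Q1 s f m (bar Q1 s a))"

lemma pend_Apath_bar: assumes bl: "border_loop Q1 s t f al"
  shows "pend t (s al, Apath Q1 s f m (bar Q1 s al)) = s al"
proof -
  let ?b = "bar Q1 s al"
  have b: "?b \<in> Q1" using border_loopD[OF bl] by auto
  have ne: "Apath Q1 s f m ?b \<noteq> []" using Apath_Cons[OF b] by auto
  have "last (Apath Q1 s f m ?b) = (g ^^ (Blen ?b - 2)) ?b" by (rule last_Apath[OF b])
  moreover have "Blen ?b - 2 = Blen ?b - 1 - 1" by simp
  moreover have "g ((g ^^ (Blen ?b - 1 - 1)) ?b) = (g ^^ (Blen ?b - 1)) ?b"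
    by (rule g_gpow_pred) (use three_le_Blen[OF b] in linarith)
  ultimately have "g (last (Apath Q1 s f m ?b)) = al" using border_loop_Bpath_bar(1)[OF bl] by simp
  moreover have "last (Apath Q1 s f m ?b) \<in> Q1"
    using ne valid_path_Apath[OF b] last_in_set[OF ne]
    by (auto simp: valid_path_def)
  ultimately have "t (last (Apath Q1 s f m ?b)) = s al" using s_g by metis
  then show ?thesis using ne by (simp add: pend_def)
qed

lemma valid_path_Apath_bar:
  "border_loop Q1 s t f al \<Longrightarrow> valid_path Q0 Q1 s t (s al, Apath Q1 s f m (bar Q1 s al))"
  using valid_path_Apath[of "bar Q1 s al"] border_loopD[of al] bar_props[of al] by auto

definition Apath_loop :: "'a \<Rightarrow> nat \<Rightarrow> 'v \<times> 'a list \<Rightarrow> 'k" where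
  "Apath_loop al j = pbasis (s al, Apath Q1 s f m (bar Q1 s al) @ replicate j al)"

lemma valid_path_Apath_loop:
  assumes bl: "border_loop Q1 s t f al"
  shows "valid_path Q0 Q1 s t (s al, Apath Q1 s f m (bar Q1 s al) @ replicate j al)"
  using valid_path_append[OF valid_path_Apath_bar[OF bl]] pend_Apath_bar[OF bl]
    valid_path_loop_pow[OF bl]
  by simp

lemma Apath_loop_in_KQ: "border_loop Q1 s t f al \<Longrightarrow> Apath_loop al j \<in> KQ"
  by (simp add: Apath_loop_def pbasis_in_path_alg valid_path_Apath_loop)

lemma Apath_loop_0: "Apath_loop al 0 = pbasis (s al, Apath Q1 s f m (bar Q1 s al))"
  by (simp add: Apath_loop_def)

lemma Apath_loop_1:
  "border_loop Q1 s t f al \<Longrightarrow> Apath_loop al 1 = pbasis (s al, Bpath Q1 s f m (bar Q1 s al))"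
  by (simp add: Apath_loop_def border_loop_Bpath_bar(2))

lemma Apath_loop_pmult_loop_pow:
  assumes bl: "border_loop Q1 s t f al"
  shows "pmult t (Apath_loop al j) (loop_pow al k) = Apath_loop al (j + k)"
  using pend_append[of t "s al" "Apath Q1 s f m (bar Q1 s al)" "replicate j al"]
    pend_Apath_bar[OF bl] pend_replicate_loop[OF bl]
  by (simp add: Apath_loop_def loop_pow_def pmult_pbasis replicate_add)

text \<open>\<open>\<alpha> \<alpha> (bar \<alpha>) = \<alpha> (f \<alpha>) (g (f \<alpha>))\<close> is a zero relation, and
  \<open>A\<^bsub>bar \<alpha>\<^esub>\<close> starts with \<open>bar \<alpha>\<close>.\<close>

lemma loop_pow2_pmult_Apath_loop_in_ideal:
  assumes S: "zero_rels Q1 s f \<subseteq> S" and bl: "border_loop Q1 s t f al"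
  shows "pmult t (loop_pow al 2) (Apath_loop al j) \<in> ideal_gen KQ (pmult t) S"
proof -
  let ?be = "bar Q1 s al" let ?v = "s al"
  have al: "al \<in> Q1" "f al = al" "g al = ?be" "?be \<in> Q1"
    using border_loopD[OF bl] by auto
  obtain r where r: "Apath Q1 s f m ?be = ?be # r"
    using Apath_Cons[OF al(4)] by blast
  have e: "pmult t (loop_pow al 2) (Apath_loop al j)
      = pbasis (?v, [] @ [al, al, ?be] @ (r @ replicate j al))"
    using pend_replicate_loop[OF bl, of 2] r
    by (simp add: Apath_loop_def loop_pow_def pmult_pbasis numeral_eq_Suc)
  have v: "valid_path Q0 Q1 s t (?v, replicate 2 al @ (Apath Q1 s f m ?be @ replicate j al))"
    using valid_path_append[OF valid_path_loop_pow[OF bl, of 2]] pend_replicate_loop[OF bl, of 2]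
      valid_path_Apath_loop[OF bl, of j]
    by simp
  have z: "pbasis (?v, [al, al, ?be]) \<in> ideal_gen KQ (pmult t) S"
    using zero_rel_in_ideal[OF S al(1)] al by simp
  show ?thesis
    unfolding e
    by (rule pbasis_infix_in_ideal[OF S]) (use v r z in \<open>simp_all add: numeral_eq_Suc\<close>)
qed

text \<open>The border relation \<open>\<alpha>\<^sup>2 - c A - e B\<close> holds in \<open>Ibar\<close> with \<open>e = b\<^sub>i\<close> and in
  \<open>I\<close> with \<open>e = 0\<close>.\<close>

context
  fixes S al e
  assumes S: "zero_rels Q1 s f \<subseteq> S" and bl: "border_loop Q1 s t f al"
    and border_rel: "loop_pow al 2 - K (c (bar Q1 s al)) * Apath_loop al 0 - K e * Apath_loop al 1
      \<in> ideal_gen KQ (pmult t) S"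
begin

lemma border_rel_shift:
  "loop_pow al (2 + j) - K (c (bar Q1 s al)) * Apath_loop al j - K e * Apath_loop al (1 + j)
    \<in> ideal_gen KQ (pmult t) S"
proof -
  have "pmult t (loop_pow al 2 - K (c (bar Q1 s al)) * Apath_loop al 0 - K e * Apath_loop al 1)
      (loop_pow al j) \<in> ideal_gen KQ (pmult t) S"
    by (rule ideal_gen.rmult[OF loop_pow_in_KQ[OF bl] border_rel])
  then show ?thesis
    by (simp add: pmult_diff_left pmult_K_left loop_pow_mult[OF bl]
      Apath_loop_pmult_loop_pow[OF bl])
qed

lemma loop_pow_ge_4_in_ideal:
  assumes "4 \<le> k"
  shows "loop_pow al k \<in> ideal_gen KQ (pmult t) S"
proof -
  let ?Id = "ideal_gen KQ (pmult t) S"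
  have "pmult t (loop_pow al 2)
      (loop_pow al 2 - K (c (bar Q1 s al)) * Apath_loop al 0 - K e * Apath_loop al 1) \<in> ?Id"
    by (rule ideal_gen.lmult[OF loop_pow_in_KQ[OF bl] border_rel])
  then have "loop_pow al 4 - K (c (bar Q1 s al)) * pmult t (loop_pow al 2) (Apath_loop al 0)
      - K e * pmult t (loop_pow al 2) (Apath_loop al 1) \<in> ?Id"
    by (simp add: pmult_diff_right pmult_K_right loop_pow_mult[OF bl])
  then have P4: "loop_pow al 4 \<in> ?Id"
    using loop_pow2_pmult_Apath_loop_in_ideal[OF S bl]
    by (metis (no_types, lifting) diff_add_cancel ideal_gen_add' ideal_gen_K)
  have "loop_pow al k = (pmult t (loop_pow al 4) (loop_pow al (k - 4)) :: 'v \<times> 'a list \<Rightarrow> 'k)"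
    using assms by (simp add: loop_pow_mult[OF bl])
  then show ?thesis
    using ideal_gen.rmult[OF loop_pow_in_KQ[OF bl, of "k - 4"] P4] by simp
qed

lemma Apath_loop_2_in_ideal: "Apath_loop al 2 \<in> ideal_gen KQ (pmult t) S"
proof -
  let ?Id = "ideal_gen KQ (pmult t) S" and ?c = "c (bar Q1 s al)"
  have cnz: "?c \<noteq> 0"
    using c_nz border_loopD[OF bl] by blast
  have Yk: "Apath_loop al j \<in> ?Id" if "4 \<le> j" for j
    using ideal_gen.lmult[OF Apath_loop_in_KQ[OF bl] loop_pow_ge_4_in_ideal[OF that], of 0]
    by (simp add: Apath_loop_pmult_loop_pow[OF bl])
  have "K ?c * Apath_loop al 3 \<in> ?Id"
  proof (rule ideal_gen_of_diff_diff)
    show "loop_pow al 5 - K ?c * Apath_loop al 3 - K e * Apath_loop al 4 \<in> ?Id"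
      using border_rel_shift[of 3] by (simp add: numeral_eq_Suc)
  qed (simp_all add: loop_pow_ge_4_in_ideal ideal_gen_K Yk)
  then have Y3: "Apath_loop al 3 \<in> ?Id"
    using ideal_gen_K_cancel cnz by blast
  have "K ?c * Apath_loop al 2 \<in> ?Id"
  proof (rule ideal_gen_of_diff_diff)
    show "loop_pow al 4 - K ?c * Apath_loop al 2 - K e * Apath_loop al 3 \<in> ?Id"
      using border_rel_shift[of 2] by (simp add: numeral_eq_Suc)
  qed (simp_all add: loop_pow_ge_4_in_ideal ideal_gen_K Y3)
  then show ?thesis
    using ideal_gen_K_cancel cnz by blast
qed

lemma Bpath_bar_loop_in_ideal:
  "pbasis (s al, Bpath Q1 s f m (bar Q1 s al) @ [al]) \<in> ideal_gen KQ (pmult t) S"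
  using Apath_loop_2_in_ideal
  by (simp add: Apath_loop_def border_loop_Bpath_bar(2)[OF bl] numeral_eq_Suc)

lemma loop_pow_3_congruent:
  "loop_pow al 3 - K (c (bar Q1 s al)) * pbasis (s al, Bpath Q1 s f m (bar Q1 s al))
    \<in> ideal_gen KQ (pmult t) S"
proof -
  let ?Id = "ideal_gen KQ (pmult t) S" and ?c = "c (bar Q1 s al)"
  have "loop_pow al 3 - K ?c * Apath_loop al 1 - K e * Apath_loop al 2 \<in> ?Id"
    using border_rel_shift[of 1] by (simp add: numeral_eq_Suc)
  then have "loop_pow al 3 - K ?c * Apath_loop al 1 \<in> ?Id"
    using ideal_gen_add'[OF _ ideal_gen_K[OF Apath_loop_2_in_ideal, of e]] by fastforce
  then show ?thesis
    unfolding Apath_loop_1[OF bl] .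
qed

end

lemma f_not_border_loop: "a \<in> Q1 \<Longrightarrow> \<not> border_loop Q1 s t f a \<Longrightarrow> \<not> border_loop Q1 s t f (f a)"
proof
  assume a: "a \<in> Q1" "\<not> border_loop Q1 s t f a" and bl: "border_loop Q1 s t f (f a)"
  have "f (f a) = f a" using bl by (simp add: border_loop_def)
  then have "f a = a" using f_inj f_in a(1) by blast
  then show False using a bl by simp
qed

lemma g_chain_Apath: "a \<in> Q1 \<Longrightarrow> g_chain (Apath Q1 s f m a)"
  using Apath_nth_Suc by (simp add: g_chain_def)

lemma g_chain_Bpath: "a \<in> Q1 \<Longrightarrow> g_chain (Bpath Q1 s f m a)"
  using Bpath_nth_Suc by (simp add: g_chain_def)

lemma set_Apath: "a \<in> Q1 \<Longrightarrow> set (Apath Q1 s f m a) \<subseteq> Q1"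
  using valid_path_Apath by (simp add: valid_path_def)

lemma set_Bpath: "a \<in> Q1 \<Longrightarrow> set (Bpath Q1 s f m a) \<subseteq> Q1"
  using valid_path_Bpath by (simp add: valid_path_def)

lemma Bpath_not_Nil: "a \<in> Q1 \<Longrightarrow> Bpath Q1 s f m a \<noteq> []"
proof -
  assume a: "a \<in> Q1"
  have "0 < Blen a" using three_le_Blen[OF a] by linarith
  then show ?thesis unfolding Bpath_eq_map[OF a] by simp
qed

lemma hd_Apath: "a \<in> Q1 \<Longrightarrow> hd (Apath Q1 s f m a) = a" using Apath_Cons by force

lemma hd_Bpath: "a \<in> Q1 \<Longrightarrow> hd (Bpath Q1 s f m a) = a"
proof -
  assume a: "a \<in> Q1"
  have "0 < Blen a" using three_le_Blen[OF a] by linarith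
  then have "[0..<Blen a] = 0 # [1..<Blen a]" by (simp add: upt_rec)
  then show ?thesis by (simp add: Bpath_eq_map[OF a])
qed

lemma valid_path_f_pair: "a \<in> Q1 \<Longrightarrow> valid_path Q0 Q1 s t (s a, [a, f a])"
  using valid_path_prefix_suffix(1)[of "s a" "[a, f a]" "[g (f a)]"] valid_path_zero_rel by simp

end

locale border_loop_subst = triangulation Q0 Q1 s t f
  for Q0 :: "'v set" and Q1 :: "'a set" and s t :: "'a \<Rightarrow> 'v" and f :: "'a \<Rightarrow> 'a" +
  fixes mu2 mu3 :: "'a \<Rightarrow> 'k::field"
  assumes mu_zero: "\<And>a. \<not> border_loop Q1 s t f a \<Longrightarrow> mu2 a = 0 \<and> mu3 a = 0"
begin

sublocale loop_subst s t mu2 mu3 .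

lemma mu_nonzero_loop: "\<forall>a\<in>Q1. (mu2 a \<noteq> 0 \<or> mu3 a \<noteq> 0) \<longrightarrow> s a = t a"
  using mu_zero by (auto simp: border_loop_def)

lemma subst_arrow_non_border: "\<not> border_loop Q1 s t f a \<Longrightarrow> subst_arrow a = pbasis (s a, [a])"
  using mu_zero[of a] by (simp add: subst_arrow_def)

lemma subst_arrow_in_KQ: "a \<in> Q1 \<Longrightarrow> subst_arrow a \<in> KQ"
  using mu_nonzero_loop arrow_ends by (intro subst_arrow_in_path_alg) auto

lemma subst_in_KQ: "x \<in> KQ \<Longrightarrow> subst x \<in> KQ"
  using mu_nonzero_loop arrow_ends by (intro subst_in_path_alg) auto

lemma subst_arrow_pmult_target: "pmult t (subst_arrow a) (pbasis (t a, [])) = subst_arrow a"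
proof -
  have "\<And>p. subst_arrow a p \<noteq> 0 \<Longrightarrow> pend t p = t a"
    by (auto simp: subst_arrow_def pbasis_def pend_def split: if_splits)
  then show ?thesis by (auto simp: pmult_vertex_right fun_eq_iff)
qed

lemma subst_path_arrow: "subst_path (s a, [a]) = subst_arrow a"
  by (simp add: subst_path_Cons subst_arrow_pmult_target)

lemma subst_path_non_border:
  assumes "valid_path Q0 Q1 s t (v, w)" "\<forall>a\<in>set w. \<not> border_loop Q1 s t f a"
  shows "subst_path (v, w) = pbasis (v, w)"
  using assms
proof (induction w arbitrary: v)
  case Nil then show ?case by simp
next
  case (Cons a w)
  have a: "v = s a" "a \<in> Q1" using Cons.prems by (auto simp: valid_path_def)
  have vw: "valid_path Q0 Q1 s t (t a, w)"
    using valid_path_prefix_suffix(2)[of v "[a]" w] Cons.prems by simp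
  have "subst_path (v, a # w) = pmult t (pbasis (s a, [a])) (pbasis (t a, w))"
    using Cons a vw by (simp add: subst_path_Cons subst_arrow_non_border)
  also have "\<dots> = pbasis (v, a # w)" using a by (simp add: pmult_pbasis)
  finally show ?case .
qed

lemma subst_arrow_loop_pow:
  "subst_arrow x = loop_pow x 1 + K (mu2 x) * loop_pow x 2 + K (mu3 x) * loop_pow x 3"
  by (simp add: subst_arrow_def loop_pow_def numeral_eq_Suc)

lemma subst_path_loop_pow_Suc:
  "border_loop Q1 s t f x
      \<Longrightarrow> subst_path (s x, replicate (Suc k) x)
        = pmult t (subst_arrow x) (subst_path (s x, replicate k x))"
  using border_loopD[of x] by (simp add: subst_path_Cons)

definition tail_ext :: "'v \<Rightarrow> 'a list \<Rightarrow> 'v \<times> 'a list \<Rightarrow> 'k" where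
  "tail_ext v w = pbasis (v, w) + K (mu2 (last w)) * pbasis (v, w @ [last w])
      + K (mu3 (last w)) * pbasis (v, w @ [last w, last w])"

lemma valid_path_tail_ext:
  assumes v: "valid_path Q0 Q1 s t (v, w)" and ne: "w \<noteq> []" and bl: "border_loop Q1 s t f (last w)"
  shows "valid_path Q0 Q1 s t (v, w @ [last w])" "valid_path Q0 Q1 s t (v, w @ [last w, last w])"
proof -
  let ?d = "last w"
  have p: "pend t (v, w) = s ?d" using ne border_loopD[OF bl] by (simp add: pend_def)
  have "valid_path Q0 Q1 s t (s ?d, replicate 1 ?d)" "valid_path Q0 Q1 s t (s ?d, replicate 2 ?d)"
    using valid_path_loop_pow[OF bl] by blast+
  then have "valid_path Q0 Q1 s t (pend t (v, w), [?d])"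
    "valid_path Q0 Q1 s t (pend t (v, w), [?d, ?d])"
    using p by (simp_all add: numeral_eq_Suc)
  then show "valid_path Q0 Q1 s t (v, w @ [last w])"
    "valid_path Q0 Q1 s t (v, w @ [last w, last w])"
    using valid_path_append[OF v] by blast+
qed

lemma subst_arrow_minus:
  "subst_arrow x - pbasis (s x, [x])
      = K (mu2 x) * pbasis (s x, [x, x]) + K (mu3 x) * pbasis (s x, [x, x, x])"
  by (simp add: subst_arrow_def)

lemma subst_arrow_minus_pmult_bar:
  assumes S: "zero_rels Q1 s f \<subseteq> S" and bl: "border_loop Q1 s t f x"
    and v: "valid_path Q0 Q1 s t (t x, bar Q1 s x # r)"
  shows "pmult t (subst_arrow x - pbasis (s x, [x])) (pbasis (t x, bar Q1 s x # r))
      \<in> ideal_gen KQ (pmult t) S"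
proof -
  have x: "x \<in> Q1" "s x = t x" "f x = x" "g x = bar Q1 s x" using border_loopD[OF bl] by auto
  let ?u = "bar Q1 s x # r"
  have z: "pbasis (s x, [x, x, bar Q1 s x]) \<in> ideal_gen KQ (pmult t) S"
    using zero_rel_in_ideal[OF S x(1)] x by simp
  have vxx: "valid_path Q0 Q1 s t (s x, [x, x])" "valid_path Q0 Q1 s t (s x, [x, x, x])"
    using valid_path_loop_pow[OF bl, of 2] valid_path_loop_pow[OF bl, of 3]
    by (simp_all add: numeral_eq_Suc)
  have v2: "valid_path Q0 Q1 s t (s x, [x, x] @ ?u)"
    using valid_path_append[OF vxx(1)] v x by simp
  have v3: "valid_path Q0 Q1 s t (s x, [x, x, x] @ ?u)"
    using valid_path_append[OF vxx(2)] v x by simp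
  have m2: "pbasis (s x, [] @ [x, x, bar Q1 s x] @ r) \<in> ideal_gen KQ (pmult t) S"
    by (rule pbasis_infix_in_ideal[OF S]) (use v2 z in simp_all)
  have m3: "pbasis (s x, [x] @ [x, x, bar Q1 s x] @ r) \<in> ideal_gen KQ (pmult t) S"
    by (rule pbasis_infix_in_ideal[OF S]) (use v3 z x in simp_all)
  have "pmult t (subst_arrow x - pbasis (s x, [x])) (pbasis (t x, ?u)) =
      K (mu2 x) * pbasis (s x, [x, x] @ ?u) + K (mu3 x) * pbasis (s x, [x, x, x] @ ?u)"
    by (simp add: subst_arrow_minus pmult_add_left pmult_K_left pmult_pbasis)
  also have "\<dots> \<in> ideal_gen KQ (pmult t) S"
    using m2 m3 by (intro ideal_gen_add' ideal_gen_K) simp_all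
  finally show ?thesis .
qed

lemma tail_ext_Cons:
  assumes "w \<noteq> []"
  shows "tail_ext (s x) (x # w) = pmult t (pbasis (s x, [x])) (tail_ext (t x) w)"
  using assms by (simp add: tail_ext_def pmult_add_right pmult_K_right pmult_pbasis)

lemma subst_arrow_minus_pmult_tail_ext:
  assumes S: "zero_rels Q1 s f \<subseteq> S" and vw: "valid_path Q0 Q1 s t (t x, w)"
    and ne: "w \<noteq> []" and hw: "hd w = g x"
  shows "pmult t (subst_arrow x - pbasis (s x, [x])) (tail_ext (t x) w) \<in> ideal_gen KQ (pmult t) S"
proof (cases "border_loop Q1 s t f x")
  case False
  then show ?thesis by (simp add: subst_arrow_non_border ideal_gen_0)
next
  case bl: True
  let ?Id = "ideal_gen KQ (pmult t) S" and ?dx = "subst_arrow x - pbasis (s x, [x])"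
  have w: "w = bar Q1 s x # tl w"
    using hw border_loopD[OF bl] ne by (metis list.collapse)
  have t1: "pmult t ?dx (pbasis (t x, w)) \<in> ?Id"
    using subst_arrow_minus_pmult_bar[OF S bl, of "tl w"] vw w by simp
  show ?thesis
  proof (cases "border_loop Q1 s t f (last w)")
    case False
    then show ?thesis using t1 mu_zero[OF False] by (simp add: tail_ext_def)
  next
    case True
    have ve: "valid_path Q0 Q1 s t (t x, w @ [last w])"
      "valid_path Q0 Q1 s t (t x, w @ [last w, last w])"
      using valid_path_tail_ext[OF vw ne True] by auto
    have "pmult t ?dx (pbasis (t x, w @ [last w])) \<in> ?Id"
      using subst_arrow_minus_pmult_bar[OF S bl, of "tl w @ [last w]"] ve w by (metis append_Cons)
    moreover have "pmult t ?dx (pbasis (t x, w @ [last w, last w])) \<in> ?Id"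
      using subst_arrow_minus_pmult_bar[OF S bl, of "tl w @ [last w, last w]"] ve w
      by (metis append_Cons)
    ultimately show ?thesis using t1
      by (simp add: tail_ext_def pmult_add_right pmult_K_right ideal_gen_add' ideal_gen_K)
  qed
qed

text \<open>Along a \<open>g\<close>-chain a border loop \<open>\<alpha>\<close> is followed by \<open>g \<alpha> = bar \<alpha>\<close>, and
  \<open>\<alpha> \<alpha> (bar \<alpha>)\<close> is a zero relation; so modulo zero relations only the powers of a border loop at
  the end of the chain survive the substitution.\<close>

lemma subst_path_g_chain:
  assumes S: "zero_rels Q1 s f \<subseteq> S"
  shows "w \<noteq> [] \<Longrightarrow> set w \<subseteq> Q1 \<Longrightarrow> g_chain w \<Longrightarrow>
    subst_path (s (hd w), w) - tail_ext (s (hd w)) w \<in> ideal_gen KQ (pmult t) S"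
proof (induction w)
  case Nil
  then show ?case by simp
next
  case (Cons x w)
  show ?case
  proof (cases "w = []")
    case True
    have "subst_path (s x, [x]) - tail_ext (s x) [x] = 0"
      by (simp add: subst_path_arrow tail_ext_def subst_arrow_def)
    then show ?thesis using True ideal_gen.zero by simp
  next
    case False
    have x: "x \<in> Q1" "set w \<subseteq> Q1"
      using Cons.prems by simp_all
    have cw: "g_chain w"
      using Cons.prems(3) unfolding g_chain_def by (metis Suc_less_eq length_Cons nth_Cons_Suc)
    have hw: "hd w = g x"
      using Cons.prems(3) False unfolding g_chain_def
      by (metis hd_conv_nth length_greater_0_conv nth_Cons_0 nth_Cons_Suc Suc_mono length_Cons)
    have shw: "s (hd w) = t x"
      using hw x s_g by simp
    have vw: "valid_path Q0 Q1 s t (t x, w)"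
      using valid_path_g_chain[OF False x(2) cw] shw by simp
    have "subst_path (s x, x # w) - tail_ext (s x) (x # w) =
        pmult t (subst_arrow x) (subst_path (t x, w) - tail_ext (t x) w)
        + pmult t (subst_arrow x - pbasis (s x, [x])) (tail_ext (t x) w)"
      by (simp add: subst_path_Cons tail_ext_Cons[OF False] pmult_diff_right pmult_diff_left)
    also have "\<dots> \<in> ideal_gen KQ (pmult t) S"
      using Cons.IH[OF False x(2) cw] subst_arrow_minus_pmult_tail_ext[OF S vw False hw]
      by (intro ideal_gen_add' ideal_gen.lmult[OF subst_arrow_in_KQ[OF x(1)]]) (simp_all add: shw)
    finally show ?thesis
      unfolding list.sel(1) .
  qed
qed

lemma subst_arrow_pmult_loop_pow1: "border_loop Q1 s t f x \<Longrightarrow>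
   pmult t (subst_arrow x) (loop_pow x 1) = loop_pow x 2 + K (mu2 x) * loop_pow x 3
     + K (mu3 x) * loop_pow x 4"
  by (simp add: subst_arrow_loop_pow pmult_add_left pmult_K_left loop_pow_mult numeral_eq_Suc)

lemma subst_arrow_pmult_loop_pow2: "border_loop Q1 s t f x \<Longrightarrow>
   pmult t (subst_arrow x) (loop_pow x 2) = loop_pow x 3 + K (mu2 x) * loop_pow x 4
     + K (mu3 x) * loop_pow x 5"
  by (simp add: subst_arrow_loop_pow pmult_add_left pmult_K_left loop_pow_mult numeral_eq_Suc)

lemma subst_arrow_pmult_loop_pow3: "border_loop Q1 s t f x \<Longrightarrow>
   pmult t (subst_arrow x) (loop_pow x 3) = loop_pow x 4 + K (mu2 x) * loop_pow x 5
     + K (mu3 x) * loop_pow x 6"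
  by (simp add: subst_arrow_loop_pow pmult_add_left pmult_K_left loop_pow_mult numeral_eq_Suc)

lemma subst_path_loop1: "border_loop Q1 s t f x \<Longrightarrow> subst_path (s x, replicate 1 x) = subst_arrow x"
  by (simp add: subst_path_arrow)

lemma subst_path_loop2:
  "border_loop Q1 s t f x
      \<Longrightarrow> subst_path (s x, replicate 2 x) = pmult t (subst_arrow x) (subst_arrow x)"
  using subst_path_loop_pow_Suc[of x 1] subst_path_loop1[of x] by (simp add: numeral_eq_Suc)

lemma subst_path_loop3:
  "border_loop Q1 s t f x
      \<Longrightarrow> subst_path (s x, replicate 3 x)
        = pmult t (subst_arrow x) (pmult t (subst_arrow x) (subst_arrow x))"
  using subst_path_loop_pow_Suc[of x 2] subst_path_loop2[of x] by (simp add: numeral_eq_Suc)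

lemma subst_arrow_square_mod:
  assumes bl: "border_loop Q1 s t f x" and N: "\<And>k. 4 \<le> k \<Longrightarrow> loop_pow x k \<in> ideal_gen KQ (pmult t) S"
  shows "pmult t (subst_arrow x) (subst_arrow x)
      - (loop_pow x 2 + K (mu2 x) * loop_pow x 3 + K (mu2 x) * loop_pow x 3)
      \<in> ideal_gen KQ (pmult t) S"
proof -
  have e: "pmult t (subst_arrow x) (subst_arrow x)
      = pmult t (subst_arrow x) (loop_pow x 1) + K (mu2 x) * pmult t (subst_arrow x) (loop_pow x 2)
      + K (mu3 x) * pmult t (subst_arrow x) (loop_pow x 3)"
    by (subst (2) subst_arrow_loop_pow) (simp only: pmult_add_right pmult_K_right)
  have "pmult t (subst_arrow x) (subst_arrow x)
      - (loop_pow x 2 + K (mu2 x) * loop_pow x 3 + K (mu2 x) * loop_pow x 3) =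
     K (mu3 x) * loop_pow x 4 + K (mu2 x) * (K (mu2 x) * loop_pow x 4 + K (mu3 x) * loop_pow x 5)
     + K (mu3 x) * (loop_pow x 4 + K (mu2 x) * loop_pow x 5 + K (mu3 x) * loop_pow x 6)"
    unfolding e subst_arrow_pmult_loop_pow1[OF bl] subst_arrow_pmult_loop_pow2[OF bl]
      subst_arrow_pmult_loop_pow3[OF bl]
    by (simp add: algebra_simps)
  also have "\<dots> \<in> ideal_gen KQ (pmult t) S"
    using N by (intro ideal_gen_add' ideal_gen_K) auto
  finally show ?thesis .
qed

lemma subst_arrow_cube_mod:
  assumes bl: "border_loop Q1 s t f x" and N: "\<And>k. 4 \<le> k \<Longrightarrow> loop_pow x k \<in> ideal_gen KQ (pmult t) S"
  shows "pmult t (subst_arrow x) (pmult t (subst_arrow x) (subst_arrow x)) - loop_pow x 3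
      \<in> ideal_gen KQ (pmult t) S"
proof -
  let ?Q = "loop_pow x 2 + K (mu2 x) * loop_pow x 3 + K (mu2 x) * loop_pow x 3"
  have d: "pmult t (subst_arrow x) (pmult t (subst_arrow x) (subst_arrow x) - ?Q)
      \<in> ideal_gen KQ (pmult t) S"
    using border_loopD[OF bl]
    by (intro ideal_gen.lmult subst_arrow_in_KQ subst_arrow_square_mod[OF bl N]) auto
  have "pmult t (subst_arrow x) ?Q - loop_pow x 3
      = K (mu2 x) * loop_pow x 4 + K (mu3 x) * loop_pow x 5 +
     K (mu2 x) * (loop_pow x 4 + K (mu2 x) * loop_pow x 5 + K (mu3 x) * loop_pow x 6) +
     K (mu2 x) * (loop_pow x 4 + K (mu2 x) * loop_pow x 5 + K (mu3 x) * loop_pow x 6)"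
    unfolding pmult_add_right pmult_K_right subst_arrow_pmult_loop_pow2[OF bl]
      subst_arrow_pmult_loop_pow3[OF bl]
    by (simp add: algebra_simps)
  also have "\<dots> \<in> ideal_gen KQ (pmult t) S"
    using N by (intro ideal_gen_add' ideal_gen_K) auto
  finally have "pmult t (subst_arrow x) ?Q - loop_pow x 3 \<in> ideal_gen KQ (pmult t) S" .
  from ideal_gen_add'[OF d this] show ?thesis by (simp add: pmult_diff_right)
qed

end

locale weighted_border_loop_subst = weighted_triangulation Q0 Q1 s t f m c
  + border_loop_subst Q0 Q1 s t f mu2 mu3
  for Q0 :: "'v set" and Q1 :: "'a set" and s t :: "'a \<Rightarrow> 'v" and f :: "'a \<Rightarrow> 'a"
    and m :: "'a \<Rightarrow> nat" and c :: "'a \<Rightarrow> 'k::field"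
    and mu2 mu3 :: "'a \<Rightarrow> 'k"
begin

lemma subst_path_Apath: assumes S: "zero_rels Q1 s f \<subseteq> S" and a: "a \<in> Q1"
  shows "subst_path (s a, Apath Q1 s f m a) - tail_ext (s a) (Apath Q1 s f m a)
      \<in> ideal_gen KQ (pmult t) S"
  using subst_path_g_chain[OF S, of "Apath Q1 s f m a"] Apath_Cons[OF a] set_Apath[OF a]
    g_chain_Apath[OF a] hd_Apath[OF a]
  by force

lemma subst_path_Bpath: assumes S: "zero_rels Q1 s f \<subseteq> S" and a: "a \<in> Q1"
  shows "subst_path (s a, Bpath Q1 s f m a) - tail_ext (s a) (Bpath Q1 s f m a)
      \<in> ideal_gen KQ (pmult t) S"
  using subst_path_g_chain[OF S, of "Bpath Q1 s f m a"] Bpath_not_Nil[OF a] set_Bpath[OF a]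
    g_chain_Bpath[OF a] hd_Bpath[OF a]
  by force

lemma tail_ext_non_border: "\<not> border_loop Q1 s t f (last w) \<Longrightarrow> tail_ext v w = pbasis (v, w)"
  using mu_zero by (simp add: tail_ext_def)

lemma Apath_extensions_in_ideal:
  assumes S: "zero_rels Q1 s f \<subseteq> S" and a: "a \<in> Q1"
    and gen: "comm_rel a \<in> ideal_gen KQ (pmult t) S"
    and bl: "border_loop Q1 s t f (last (Apath Q1 s f m (bar Q1 s a)))"
  shows "pbasis (s a, Apath Q1 s f m (bar Q1 s a) @ [last (Apath Q1 s f m (bar Q1 s a))])
      \<in> ideal_gen KQ (pmult t) S"
    "pbasis (s a, Apath Q1 s f m (bar Q1 s a) @ [last (Apath Q1 s f m (bar Q1 s a)),
      last (Apath Q1 s f m (bar Q1 s a))])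
      \<in> ideal_gen KQ (pmult t) S"
proof -
  let ?be = "bar Q1 s a" let ?A = "Apath Q1 s f m ?be" let ?d = "last ?A"
  let ?Id = "ideal_gen KQ (pmult t) S"
  have be: "?be \<in> Q1" "s ?be = s a" using bar_props a by auto
  have d: "?d \<in> Q1" "s ?d = t ?d" using border_loopD[OF bl] by auto
  have gd: "g (f a) = ?d" by (rule g_f_eq_last_Apath_bar[OF a bl])
  have ne: "?A \<noteq> []" using Apath_Cons[OF be(1)] by auto
  have "s (g (f a)) = t (f a)" using s_g f_in a by blast
  then have p1: "pend t (s a, [a, f a]) = s ?d" using gd by (simp add: pend_def)
  have p2: "pend t (s a, ?A) = s ?d" using ne d by (simp add: pend_def)
  have vd: "valid_path Q0 Q1 s t (s ?d, [?d])" using d arrow_ends by (intro valid_path_single) auto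
  have "pmult t (comm_rel a) (pbasis (s ?d, [?d])) \<in> ?Id"
    by (rule ideal_gen.rmult[OF pbasis_in_path_alg[OF vd] gen])
  then have m: "pbasis (s a, [a, f a, ?d]) - K (c ?be) * pbasis (s a, ?A @ [?d]) \<in> ?Id"
    using p1 p2 be by (simp add: comm_rel_def pmult_diff_left pmult_K_left pmult_pbasis)
  have z: "pbasis (s a, [a, f a, ?d]) \<in> ?Id" using zero_rel_in_ideal[OF S a] gd by simp
  have "K (c ?be) * pbasis (s a, ?A @ [?d]) \<in> ?Id"
    using ideal_gen_of_diff'[OF m z] .
  then show 1: "pbasis (s a, ?A @ [?d]) \<in> ?Id" using ideal_gen_K_cancel c_nz be by blast
  have "pend t (s a, ?A @ [?d]) = s ?d" using d by (simp add: pend_def)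
  then have eq: "pmult t (pbasis (s a, ?A @ [?d])) (pbasis (s ?d, [?d]))
      = pbasis (s a, ?A @ [?d, ?d])"
    by (simp add: pmult_pbasis)
  have "pmult t (pbasis (s a, ?A @ [?d])) (pbasis (s ?d, [?d])) \<in> ?Id"
    by (rule ideal_gen.rmult[OF pbasis_in_path_alg[OF vd] 1])
  then show "pbasis (s a, ?A @ [?d, ?d]) \<in> ?Id" unfolding eq .
qed

lemma subst_comm_rel:
  assumes S: "zero_rels Q1 s f \<subseteq> S" and a: "a \<in> Q1" and nb: "\<not> border_loop Q1 s t f a"
    and gen: "comm_rel a \<in> ideal_gen KQ (pmult t) S"
  shows "subst (comm_rel a) \<in> ideal_gen KQ (pmult t) S"
proof -
  let ?be = "bar Q1 s a" let ?A = "Apath Q1 s f m ?be" let ?d = "last ?A"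
  let ?Id = "ideal_gen KQ (pmult t) S"
  let ?A' = "pbasis (s a, ?A)"
  have be: "?be \<in> Q1" "s ?be = s a" using bar_props a by auto
  have ph: "subst (comm_rel a) = subst_path (s a, [a, f a]) - K (c ?be) * subst_path (s a, ?A)"
    unfolding comm_rel_def be(2) subst_diff[OF fsupp_pbasis fsupp_K[OF fsupp_pbasis]]
      subst_K[OF fsupp_pbasis] subst_pbasis ..
  have P2: "subst_path (s a, [a, f a]) = pbasis (s a, [a, f a])"
    using subst_path_non_border[OF valid_path_f_pair[OF a]] nb f_not_border_loop[OF a nb] by simp
  have D: "subst_path (s a, ?A) - tail_ext (s a) ?A \<in> ?Id" using subst_path_Apath[OF S be(1)] be
    by simp
  have DE: "tail_ext (s a) ?A - ?A' \<in> ?Id"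
  proof (cases "border_loop Q1 s t f ?d")
    case False then show ?thesis by (simp add: tail_ext_non_border ideal_gen_0)
  next
    case True
    have "tail_ext (s a) ?A - ?A'
        = K (mu2 ?d) * pbasis (s a, ?A @ [?d]) + K (mu3 ?d) * pbasis (s a, ?A @ [?d, ?d])"
      by (simp add: tail_ext_def)
    also have "\<dots> \<in> ?Id" using Apath_extensions_in_ideal[OF S a gen True]
      by (intro ideal_gen_add' ideal_gen_K)
    finally show ?thesis .
  qed
  have "subst (comm_rel a) - comm_rel a
      = - (K (c ?be) * ((subst_path (s a, ?A) - tail_ext (s a) ?A) + (tail_ext (s a) ?A - ?A')))"
    unfolding ph P2 unfolding comm_rel_def be(2)
    by (simp add: algebra_simps K_distrib K_distrib_diff)
  also have "\<dots> \<in> ?Id" using D DE by (intro ideal_gen_uminus ideal_gen_K ideal_gen_add')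
  finally show ?thesis using ideal_gen_of_diff gen by blast
qed

lemma subst_zero_rel_border:
  assumes S: "zero_rels Q1 s f \<subseteq> S" and bl: "border_loop Q1 s t f be"
  shows "subst (pbasis (s be, [be, f be, g (f be)])) \<in> ideal_gen KQ (pmult t) S"
proof -
  let ?Id = "ideal_gen KQ (pmult t) S" let ?bb = "bar Q1 s be" let ?v = "s be"
  have b: "be \<in> Q1" "s be = t be" "f be = be" "g be = ?bb" "?bb \<in> Q1" "s ?bb = s be"
    using border_loopD[OF bl] bar_props[of be] by auto
  have nbb: "\<not> border_loop Q1 s t f ?bb" using bar_not_border_loop[OF bl two_vertices] .
  have vbb: "valid_path Q0 Q1 s t (?v, [?bb])" using b arrow_ends by (metis valid_path_single)
  have P1: "subst_path (?v, [?bb]) = pbasis (?v, [?bb])" using subst_path_non_border[OF vbb] nbb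
    by simp
  have X: "subst_path (?v, [be, ?bb]) = pmult t (subst_arrow be) (pbasis (?v, [?bb]))"
    using P1 b by (simp add: subst_path_Cons)
  have Phi3: "subst (pbasis (s be, [be, f be, g (f be)]))
      = pmult t (subst_arrow be) (subst_path (?v, [be, ?bb]))"
    using b by (simp add: subst_pbasis subst_path_Cons)
  have k: "pmult t (subst_arrow be - pbasis (s be, [be])) (pbasis (t be, [?bb])) \<in> ?Id"
    using subst_arrow_minus_pmult_bar[OF S bl, of "[]"] vbb b by simp
  have d1: "subst_path (?v, [be, ?bb]) - pbasis (?v, [be, ?bb]) \<in> ?Id"
    using k b unfolding X by (simp add: pmult_diff_left pmult_pbasis)
  have d2: "pmult t (subst_arrow be) (subst_path (?v, [be, ?bb]) - pbasis (?v, [be, ?bb])) \<in> ?Id"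
    by (rule ideal_gen.lmult[OF subst_arrow_in_KQ[OF b(1)] d1])
  have z: "pbasis (?v, [be, be, ?bb]) \<in> ?Id" using zero_rel_in_ideal[OF S b(1)] b by simp
  have vz: "valid_path Q0 Q1 s t (?v, [be, be, ?bb])" using valid_path_zero_rel[OF b(1)] b by simp
  have zj: "pbasis (?v, replicate j be @ [be, be, ?bb] @ []) \<in> ?Id" for j
  proof (rule pbasis_infix_in_ideal[OF S])
    show "valid_path Q0 Q1 s t (?v, replicate j be @ [be, be, ?bb] @ [])"
      using valid_path_append[OF valid_path_loop_pow[OF bl, of j]]
        pend_replicate_loop[OF bl, of j] vz
      by simp
    show "pbasis (pend t (?v, replicate j be), [be, be, ?bb]) \<in> ?Id"
      using pend_replicate_loop[OF bl] z by simp
  qed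
  have "pmult t (subst_arrow be) (pbasis (?v, [be, ?bb])) =
     pbasis (?v, replicate 0 be @ [be, be, ?bb] @ [])
     + K (mu2 be) * pbasis (?v, replicate 1 be @ [be, be, ?bb] @ [])
     + K (mu3 be) * pbasis (?v, replicate 2 be @ [be, be, ?bb] @ [])"
    using b by (simp add: subst_arrow_def pmult_add_left pmult_K_left pmult_pbasis numeral_eq_Suc)
  also have "\<dots> \<in> ?Id" using zj by (intro ideal_gen_add' ideal_gen_K)
  finally have d3: "pmult t (subst_arrow be) (pbasis (?v, [be, ?bb])) \<in> ?Id" .
  have "subst (pbasis (s be, [be, f be, g (f be)])) =
      pmult t (subst_arrow be) (subst_path (?v, [be, ?bb]) - pbasis (?v, [be, ?bb]))
      + pmult t (subst_arrow be) (pbasis (?v, [be, ?bb]))"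
    unfolding Phi3 by (simp add: pmult_diff_right)
  also have "\<dots> \<in> ?Id" using d2 d3 by (rule ideal_gen_add')
  finally show ?thesis .
qed

lemma subst_zero_rel_non_border:
  assumes S: "zero_rels Q1 s f \<subseteq> S" and be: "be \<in> Q1" and nb: "\<not> border_loop Q1 s t f be"
  shows "subst (pbasis (s be, [be, f be, g (f be)])) \<in> ideal_gen KQ (pmult t) S"
proof -
  let ?Id = "ideal_gen KQ (pmult t) S" let ?v = "s be" let ?d = "g (f be)"
  have fb: "f be \<in> Q1" "s (f be) = t be" "\<not> border_loop Q1 s t f (f be)"
    using f_in s_f f_not_border_loop[OF be nb] be by auto
  have d: "?d \<in> Q1" "s ?d = t (f be)" using g_in s_g fb by auto
  have "subst (pbasis (?v, [be, f be, ?d]))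
      = pmult t (pbasis (?v, [be])) (pmult t (pbasis (t be, [f be])) (subst_arrow ?d))"
    using fb d nb
    by (simp add: subst_pbasis subst_path_Cons subst_arrow_non_border subst_arrow_pmult_target)
  also have "\<dots> = pmult t (pbasis (?v, [be, f be])) (subst_arrow ?d)"
    using fb by (simp add: pmult_assoc[symmetric] pmult_pbasis)
  finally have e: "subst (pbasis (?v, [be, f be, ?d]))
      = pmult t (pbasis (?v, [be, f be])) (subst_arrow ?d)" .
  have z: "pbasis (?v, [be, f be, ?d]) \<in> ?Id" using zero_rel_in_ideal[OF S be] by simp
  have p: "pend t (?v, [be, f be]) = s ?d" using d by (simp add: pend_def)
  show ?thesis
  proof (cases "border_loop Q1 s t f ?d")
    case False
    have "pmult t (pbasis (?v, [be, f be])) (subst_arrow ?d) = pbasis (?v, [be, f be, ?d])"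
      using False p by (simp add: subst_arrow_non_border pmult_pbasis)
    then show ?thesis using e z by simp
  next
    case True
    have dl: "s ?d = t ?d" using border_loopD[OF True] by simp
    have zj: "pbasis (?v, [] @ [be, f be, ?d] @ replicate j ?d) \<in> ?Id" for j
    proof (rule pbasis_infix_in_ideal[OF S])
      show "valid_path Q0 Q1 s t (?v, [] @ [be, f be, ?d] @ replicate j ?d)"
        using valid_path_append[OF valid_path_zero_rel[OF be], of "replicate j ?d"]
          valid_path_loop_pow[OF True, of j] dl
        by (simp add: pend_def)
      show "pbasis (pend t (?v, []), [be, f be, ?d]) \<in> ?Id" using z by simp
    qed
    have "pmult t (pbasis (?v, [be, f be])) (subst_arrow ?d) =
       pbasis (?v, [] @ [be, f be, ?d] @ replicate 0 ?d)
       + K (mu2 ?d) * pbasis (?v, [] @ [be, f be, ?d] @ replicate 1 ?d)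
       + K (mu3 ?d) * pbasis (?v, [] @ [be, f be, ?d] @ replicate 2 ?d)"
      using p by (simp add: subst_arrow_def pmult_add_right pmult_K_right pmult_pbasis
        numeral_eq_Suc)
    also have "\<dots> \<in> ?Id" using zj by (intro ideal_gen_add' ideal_gen_K)
    finally show ?thesis using e by simp
  qed
qed

lemma subst_zero_rel:
  assumes "zero_rels Q1 s f \<subseteq> S" "be \<in> Q1"
  shows "subst (pbasis (s be, [be, f be, g (f be)])) \<in> ideal_gen KQ (pmult t) S"
  using subst_zero_rel_border[OF assms(1)] subst_zero_rel_non_border[OF assms] by blast

lemma subst_loop_pow2:
  "border_loop Q1 s t f a \<Longrightarrow> subst (loop_pow a 2) = pmult t (subst_arrow a) (subst_arrow a)"
  by (simp add: loop_pow_def subst_pbasis subst_path_loop2)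

lemma subst_Apath_bar:
  assumes S: "zero_rels Q1 s f \<subseteq> S" and bl: "border_loop Q1 s t f a"
  shows "subst (pbasis (s a, Apath Q1 s f m (bar Q1 s a)))
      - pbasis (s a, Apath Q1 s f m (bar Q1 s a))
     \<in> ideal_gen KQ (pmult t) S"
proof -
  have be: "bar Q1 s a \<in> Q1" "s (bar Q1 s a) = s a" using border_loopD[OF bl] bar_props[of a]
    by auto
  show ?thesis
    using subst_path_Apath[OF S be(1)] tail_ext_non_border[OF border_loop_Bpath_bar(3)[OF bl]] be
    by (simp add: subst_pbasis)
qed

lemma subst_Bpath_bar:
  assumes S: "zero_rels Q1 s f \<subseteq> S" and bl: "border_loop Q1 s t f a"
    and Y: "pbasis (s a, Bpath Q1 s f m (bar Q1 s a) @ [a]) \<in> ideal_gen KQ (pmult t) S"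
  shows "subst (pbasis (s a, Bpath Q1 s f m (bar Q1 s a)))
      - pbasis (s a, Bpath Q1 s f m (bar Q1 s a))
     - K (mu2 a) * pbasis (s a, Bpath Q1 s f m (bar Q1 s a) @ [a]) \<in> ideal_gen KQ (pmult t) S"
proof -
  let ?B = "Bpath Q1 s f m (bar Q1 s a)" let ?Id = "ideal_gen KQ (pmult t) S"
  have be: "bar Q1 s a \<in> Q1" "s (bar Q1 s a) = s a" using border_loopD[OF bl] bar_props[of a]
    by auto
  have lB: "last ?B = a" using border_loop_Bpath_bar(2)[OF bl] by simp
  have a: "s a = t a" "a \<in> Q1" using border_loopD[OF bl] by auto
  have D: "subst (pbasis (s a, ?B)) - tail_ext (s a) ?B \<in> ?Id"
    using subst_path_Bpath[OF S be(1)] be by (simp add: subst_pbasis)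
  have va: "valid_path Q0 Q1 s t (s a, [a])" using a arrow_ends by (metis valid_path_single)
  have "pmult t (pbasis (s a, ?B @ [a])) (pbasis (s a, [a])) = pbasis (s a, ?B @ [a, a])"
    using a by (simp add: pmult_pbasis pend_def)
  moreover have "pmult t (pbasis (s a, ?B @ [a])) (pbasis (s a, [a])) \<in> ?Id"
    by (rule ideal_gen.rmult[OF pbasis_in_path_alg[OF va] Y])
  ultimately have Y2: "pbasis (s a, ?B @ [a, a]) \<in> ?Id" by metis
  have "subst (pbasis (s a, ?B)) - pbasis (s a, ?B) - K (mu2 a) * pbasis (s a, ?B @ [a]) =
      (subst (pbasis (s a, ?B)) - tail_ext (s a) ?B) + K (mu3 a) * pbasis (s a, ?B @ [a, a])"
    unfolding tail_ext_def lB by (simp add: algebra_simps)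
  also have "\<dots> \<in> ?Id" using D Y2 by (intro ideal_gen_add' ideal_gen_K)
  finally show ?thesis .
qed

end

section \<open>The isomorphism\<close>

locale border_deformation = weighted_triangulation Q0 Q1 s t f m c
  for Q0 :: "'v set" and Q1 :: "'a set" and s t :: "'a \<Rightarrow> 'v" and f :: "'a \<Rightarrow> 'a"
    and m :: "'a \<Rightarrow> nat" and c :: "'a \<Rightarrow> 'k::field" +
  fixes b :: "'v \<Rightarrow> 'k"
  assumes char_not_2: "(2::'k) \<noteq> 0"
begin

definition lam :: "'a \<Rightarrow> 'k" where
  "lam a = (if border_loop Q1 s t f a then b (s a) / (2 * c (bar Q1 s a)) else 0)"

definition nu3 :: "'a \<Rightarrow> 'k" where
  "nu3 a = (if border_loop Q1 s t f a then 2 * lam a * lam a else 0)"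

sublocale F: weighted_border_loop_subst Q0 Q1 s t f m c lam "\<lambda>_. 0"
  by unfold_locales (auto simp: lam_def)

sublocale G: weighted_border_loop_subst Q0 Q1 s t f m c "\<lambda>a. - lam a" nu3
  by unfold_locales (auto simp: lam_def nu3_def)

abbreviation I where "I \<equiv> ideal_gen KQ (pmult t) (gens_I Q1 s f m c)"
abbreviation Ibar where "Ibar \<equiv> ideal_gen KQ (pmult t) (gens_Ibar Q1 s t f m c b)"

lemma zero_rels_gens_I: "zero_rels Q1 s f \<subseteq> gens_I Q1 s f m c"
  by (auto simp: gens_I_def)

lemma zero_rels_gens_Ibar: "zero_rels Q1 s f \<subseteq> gens_Ibar Q1 s t f m c b"
  by (auto simp: gens_Ibar_def)

lemma fun_diff_pbasis_eq: "(\<lambda>p. pbasis X p - cc * pbasis Y p) = pbasis X - K cc * pbasis Y"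
  by (simp add: fun_eq_iff)

lemma comm_rel_in_I: "a \<in> Q1 \<Longrightarrow> comm_rel a \<in> I"
  by (rule ideal_gen.base) (auto simp: gens_I_def comm_rel_def fun_diff_pbasis_eq)

lemma comm_rel_in_Ibar: "a \<in> Q1 \<Longrightarrow> \<not> border_loop Q1 s t f a \<Longrightarrow> comm_rel a \<in> Ibar"
  by (rule ideal_gen.base) (auto simp: gens_Ibar_def comm_rel_def fun_diff_pbasis_eq)

lemma border_gen_eq: "border_loop Q1 s t f a \<Longrightarrow>
  (\<lambda>p. pbasis (s a, [a, a]) p
    - c (bar Q1 s a) * pbasis (s (bar Q1 s a), Apath Q1 s f m (bar Q1 s a)) p
       - b (s a) * pbasis (s (bar Q1 s a), Bpath Q1 s f m (bar Q1 s a)) p) =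
   loop_pow a 2 - K (c (bar Q1 s a)) * pbasis (s a, Apath Q1 s f m (bar Q1 s a))
     - K (b (s a)) * pbasis (s a, Bpath Q1 s f m (bar Q1 s a))"
  using bar_props[of a] border_loopD[of a] by (simp add: fun_eq_iff loop_pow_def numeral_eq_Suc)

lemma comm_rel_border: "border_loop Q1 s t f a \<Longrightarrow>
  comm_rel a = loop_pow a 2 - K (c (bar Q1 s a)) * pbasis (s a, Apath Q1 s f m (bar Q1 s a))"
  using bar_props[of a] border_loopD[of a] by (simp add: comm_rel_def loop_pow_def numeral_eq_Suc)

lemma border_gen_in_Ibar: "border_loop Q1 s t f a \<Longrightarrow>
  loop_pow a 2 - K (c (bar Q1 s a)) * pbasis (s a, Apath Q1 s f m (bar Q1 s a))
     - K (b (s a)) * pbasis (s a, Bpath Q1 s f m (bar Q1 s a)) \<in> Ibar"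
  by (rule ideal_gen.base) (auto simp: gens_Ibar_def border_gen_eq[symmetric] intro!: exI[of _ a])

lemma border_gen0_in_I: "border_loop Q1 s t f a \<Longrightarrow>
  loop_pow a 2 - K (c (bar Q1 s a)) * pbasis (s a, Apath Q1 s f m (bar Q1 s a))
     - K 0 * pbasis (s a, Bpath Q1 s f m (bar Q1 s a)) \<in> I"
  using comm_rel_in_I[of a] comm_rel_border[of a] border_loopD[of a] by simp

lemma border_rel_in_I:
  assumes "border_loop Q1 s t f a"
  shows "loop_pow a 2 - K (c (bar Q1 s a)) * Apath_loop a 0 - K 0 * Apath_loop a 1 \<in> I"
  using border_gen0_in_I[OF assms] unfolding Apath_loop_0 Apath_loop_1[OF assms] .

lemma border_rel_in_Ibar:
  assumes "border_loop Q1 s t f a"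
  shows "loop_pow a 2 - K (c (bar Q1 s a)) * Apath_loop a 0 - K (b (s a)) * Apath_loop a 1 \<in> Ibar"
  using border_gen_in_Ibar[OF assms] unfolding Apath_loop_0 Apath_loop_1[OF assms] .

lemma K_b_eq: assumes bl: "border_loop Q1 s t f a"
  shows "(K (b (s a)) :: 'v \<times> 'a list \<Rightarrow> 'k)
      = K (lam a) * K (c (bar Q1 s a)) + K (lam a) * K (c (bar Q1 s a))"
proof -
  have cnz: "c (bar Q1 s a) \<noteq> 0" using c_nz bar_props border_loopD[OF bl] by blast
  have "b (s a) = lam a * c (bar Q1 s a) + lam a * c (bar Q1 s a)"
    using bl cnz char_not_2 by (simp add: lam_def field_simps)
  then show ?thesis by (simp add: fun_eq_iff)
qed

lemma subst_F_border_gen: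
  assumes bl: "border_loop Q1 s t f a"
  shows "F.subst (loop_pow a 2 - K (c (bar Q1 s a)) * pbasis (s a, Apath Q1 s f m (bar Q1 s a))
     - K (b (s a)) * pbasis (s a, Bpath Q1 s f m (bar Q1 s a))) \<in> I"
proof -
  let ?c = "c (bar Q1 s a)" let ?b = "b (s a)" let ?l = "lam a"
  let ?A = "pbasis (s a, Apath Q1 s f m (bar Q1 s a))"
  let ?B = "pbasis (s a, Bpath Q1 s f m (bar Q1 s a))"
  let ?Y = "pbasis (s a, Bpath Q1 s f m (bar Q1 s a) @ [a])"
  let ?I2 = "pmult t (F.subst_arrow a) (F.subst_arrow a)"
  note rel = zero_rels_gens_I bl border_rel_in_I[OF bl]
  have D1: "?I2 - (loop_pow a 2 + K ?l * loop_pow a 3 + K ?l * loop_pow a 3) \<in> I"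
    using F.subst_arrow_square_mod[OF bl, of "gens_I Q1 s f m c"] loop_pow_ge_4_in_ideal[OF rel]
    by simp
  have D2: "F.subst ?A - ?A \<in> I" by (rule F.subst_Apath_bar[OF zero_rels_gens_I bl])
  have D3: "F.subst ?B - ?B - K ?l * ?Y \<in> I"
    using F.subst_Bpath_bar[OF zero_rels_gens_I bl Bpath_bar_loop_in_ideal[OF rel]] by simp
  have G0: "loop_pow a 2 - K ?c * ?A \<in> I" using border_gen0_in_I[OF bl] by simp
  have G3: "loop_pow a 3 - K ?c * ?B \<in> I" by (rule loop_pow_3_congruent[OF rel])
  have ph: "F.subst (loop_pow a 2 - K ?c * ?A - K ?b * ?B)
      = ?I2 - K ?c * F.subst ?A - K ?b * F.subst ?B"
    by (simp add: F.subst_diff F.subst_K loop_pow_def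
      F.subst_loop_pow2[OF bl, unfolded loop_pow_def])
  have eq: "?I2 - K ?c * F.subst ?A - K ?b * F.subst ?B =
      (?I2 - (loop_pow a 2 + K ?l * loop_pow a 3 + K ?l * loop_pow a 3))
      - K ?c * (F.subst ?A - ?A) - K ?b * (F.subst ?B - ?B - K ?l * ?Y)
      + (loop_pow a 2 - K ?c * ?A)
      + K ?l * (loop_pow a 3 - K ?c * ?B) + K ?l * (loop_pow a 3 - K ?c * ?B) - K ?b * (K ?l * ?Y)"
    unfolding K_b_eq[OF bl] by (simp add: algebra_simps)
  have "?I2 - K ?c * F.subst ?A - K ?b * F.subst ?B \<in> I"
    unfolding eq
    by (insert D1 D2 D3 G0 G3 Bpath_bar_loop_in_ideal[OF rel]) (assumption | rule ideal_gen_add'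
      ideal_gen_diff ideal_gen_K)+
  then show ?thesis unfolding ph .
qed

lemma subst_G_border_rel:
  assumes bl: "border_loop Q1 s t f a"
  shows "G.subst (loop_pow a 2 - K (c (bar Q1 s a)) * pbasis (s a, Apath Q1 s f m (bar Q1 s a)))
      \<in> Ibar"
proof -
  let ?c = "c (bar Q1 s a)" let ?b = "b (s a)" let ?l = "lam a"
  let ?A = "pbasis (s a, Apath Q1 s f m (bar Q1 s a))"
  let ?B = "pbasis (s a, Bpath Q1 s f m (bar Q1 s a))"
  let ?I2 = "pmult t (G.subst_arrow a) (G.subst_arrow a)"
  note rel = zero_rels_gens_Ibar bl border_rel_in_Ibar[OF bl]
  have D1: "?I2 - (loop_pow a 2 + K (- ?l) * loop_pow a 3 + K (- ?l) * loop_pow a 3) \<in> Ibar"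
    using G.subst_arrow_square_mod[OF bl, of "gens_Ibar Q1 s t f m c b"]
      loop_pow_ge_4_in_ideal[OF rel]
    by simp
  have D2: "G.subst ?A - ?A \<in> Ibar" by (rule G.subst_Apath_bar[OF zero_rels_gens_Ibar bl])
  have G0: "loop_pow a 2 - K ?c * ?A - K ?b * ?B \<in> Ibar" by (rule border_gen_in_Ibar[OF bl])
  have G3: "loop_pow a 3 - K ?c * ?B \<in> Ibar" by (rule loop_pow_3_congruent[OF rel])
  have ph: "G.subst (loop_pow a 2 - K ?c * ?A) = ?I2 - K ?c * G.subst ?A"
    by (simp add: G.subst_diff G.subst_K loop_pow_def
      G.subst_loop_pow2[OF bl, unfolded loop_pow_def])
  have km: "(K (- ?l) :: 'v \<times> 'a list \<Rightarrow> 'k) = - K ?l" by (simp add: fun_eq_iff)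
  have eq: "?I2 - K ?c * G.subst ?A =
      (?I2 - (loop_pow a 2 + K (- ?l) * loop_pow a 3 + K (- ?l) * loop_pow a 3)) - K ?c * (G.subst ?A - ?A)
      + (loop_pow a 2 - K ?c * ?A - K ?b * ?B)
      - K ?l * (loop_pow a 3 - K ?c * ?B) - K ?l * (loop_pow a 3 - K ?c * ?B)"
    unfolding km K_b_eq[OF bl] by (simp add: algebra_simps)
  have "?I2 - K ?c * G.subst ?A \<in> Ibar"
    unfolding eq
    by (insert D1 D2 G0 G3) (assumption | rule ideal_gen_add' ideal_gen_diff ideal_gen_K)+
  then show ?thesis unfolding ph .
qed

lemma fsupp_pbasis_diff2: "fsupp (\<lambda>p. pbasis X p - c1 * pbasis Y p :: 'k)"
  unfolding fsupp_def by (rule finite_subset[of _ "{X, Y}"]) (auto simp: pbasis_def)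

lemma fsupp_pbasis_diff3: "fsupp (\<lambda>p. pbasis X p - c1 * pbasis Y p - c2 * pbasis Z p :: 'k)"
  unfolding fsupp_def by (rule finite_subset[of _ "{X, Y, Z}"]) (auto simp: pbasis_def)

lemma gens_Ibar_fsupp: "x \<in> gens_Ibar Q1 s t f m c b \<Longrightarrow> fsupp x"
  unfolding gens_Ibar_def zero_rels_def using fsupp_pbasis_diff2 fsupp_pbasis_diff3 by auto

lemma gens_I_fsupp: "x \<in> gens_I Q1 s f m c \<Longrightarrow> fsupp x"
  unfolding gens_I_def zero_rels_def using fsupp_pbasis_diff2 by auto

lemma subst_F_gens_Ibar: "x \<in> gens_Ibar Q1 s t f m c b \<Longrightarrow> F.subst x \<in> I"
proof -
  assume x: "x \<in> gens_Ibar Q1 s t f m c b"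
  then consider (nb) a where "a \<in> Q1" "\<not> border_loop Q1 s t f a" "x = comm_rel a"
    | (bl) a where "border_loop Q1 s t f a" "x
        = loop_pow a 2 - K (c (bar Q1 s a)) * pbasis (s a, Apath Q1 s f m (bar Q1 s a))
     - K (b (s a)) * pbasis (s a, Bpath Q1 s f m (bar Q1 s a))"
    | (z) be where "be \<in> Q1" "x = pbasis (s be, [be, f be, g (f be)])"
    unfolding gens_Ibar_def zero_rels_def
    by (auto simp: comm_rel_def fun_diff_pbasis_eq border_gen_eq)
  then show ?thesis
  proof cases
    case nb then show ?thesis using F.subst_comm_rel[OF zero_rels_gens_I _ _ comm_rel_in_I] by simp
  next
    case bl then show ?thesis using subst_F_border_gen by simp
  next
    case z then show ?thesis using F.subst_zero_rel[OF zero_rels_gens_I] by simp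
  qed
qed

lemma subst_G_gens_I: "x \<in> gens_I Q1 s f m c \<Longrightarrow> G.subst x \<in> Ibar"
proof -
  assume x: "x \<in> gens_I Q1 s f m c"
  then consider (g) a where "a \<in> Q1" "x = comm_rel a"
    | (z) be where "be \<in> Q1" "x = pbasis (s be, [be, f be, g (f be)])"
    unfolding gens_I_def zero_rels_def by (auto simp: comm_rel_def fun_diff_pbasis_eq)
  then show ?thesis
  proof cases
    case g
    show ?thesis
    proof (cases "border_loop Q1 s t f a")
      case True then show ?thesis using subst_G_border_rel g comm_rel_border by simp
    next
      case False then show ?thesis
        using G.subst_comm_rel[OF zero_rels_gens_Ibar g(1) False] comm_rel_in_Ibar[OF g(1) False] g
        by simp
    qed
  next
    case z then show ?thesis using G.subst_zero_rel[OF zero_rels_gens_Ibar] by simp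
  qed
qed

lemma subst_F_Ibar: "x \<in> Ibar \<Longrightarrow> F.subst x \<in> I"
  using subst_F_gens_Ibar gens_Ibar_fsupp
  by (intro fs_alg_endo_ideal_gen[OF F.subst_fs_alg_endo]) (auto intro: F.subst_in_KQ)

lemma subst_G_I: "x \<in> I \<Longrightarrow> G.subst x \<in> Ibar"
  using subst_G_gens_I gens_I_fsupp
  by (intro fs_alg_endo_ideal_gen[OF G.subst_fs_alg_endo]) (auto intro: G.subst_in_KQ)

lemma K_nu3_eq:
  "border_loop Q1 s t f a
      \<Longrightarrow> (K (nu3 a) :: 'v \<times> 'a list \<Rightarrow> 'k) = K (lam a) * K (lam a) + K (lam a) * K (lam a)"
  by (simp add: fun_eq_iff nu3_def)

lemma subst_FG_arrow: assumes a: "a \<in> Q1"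
  shows "F.subst (G.subst (pbasis (s a, [a]))) - pbasis (s a, [a]) \<in> I"
proof (cases "border_loop Q1 s t f a")
  case False
  then show ?thesis using ideal_gen_0
    by (simp add: G.subst_pbasis G.subst_path_arrow G.subst_arrow_non_border F.subst_pbasis
      F.subst_path_arrow F.subst_arrow_non_border)
next
  case bl: True
  let ?l = "lam a" let ?I2 = "pmult t (F.subst_arrow a) (F.subst_arrow a)"
  let ?I3 = "pmult t (F.subst_arrow a) (pmult t (F.subst_arrow a) (F.subst_arrow a))"
  note rel = zero_rels_gens_I bl border_rel_in_I[OF bl]
  have D1: "?I2 - (loop_pow a 2 + K ?l * loop_pow a 3 + K ?l * loop_pow a 3) \<in> I"
    using F.subst_arrow_square_mod[OF bl, of "gens_I Q1 s f m c"] loop_pow_ge_4_in_ideal[OF rel]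
    by simp
  have D3: "?I3 - loop_pow a 3 \<in> I"
    using F.subst_arrow_cube_mod[OF bl, of "gens_I Q1 s f m c"] loop_pow_ge_4_in_ideal[OF rel]
    by simp
  have Gi: "G.subst (pbasis (s a, [a]))
      = loop_pow a 1 + K (- ?l) * loop_pow a 2 + K (nu3 a) * loop_pow a 3"
    using G.subst_arrow_loop_pow[of a] by (simp add: G.subst_pbasis G.subst_path_arrow )
  have Fi: "F.subst_arrow a = loop_pow a 1 + K ?l * loop_pow a 2 + K 0 * loop_pow a 3"
    using F.subst_arrow_loop_pow[of a] by simp
  have P1: "pbasis (s a, [a]) = loop_pow a 1" by (simp add: loop_pow_def)
  have e1: "F.subst (loop_pow a 1) = F.subst_arrow a" "F.subst (loop_pow a (Suc 0))
      = F.subst_arrow a"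
    by (simp_all add: loop_pow_def F.subst_pbasis F.subst_path_arrow)
  have e2: "F.subst (loop_pow a 2) = ?I2"
    by (simp add: loop_pow_def F.subst_pbasis F.subst_path_loop2[OF bl])
  have e3: "F.subst (loop_pow a 3) = ?I3"
    by (simp add: loop_pow_def F.subst_pbasis F.subst_path_loop3[OF bl])
  have fs: "\<And>k. fsupp (loop_pow a k :: 'v \<times> 'a list \<Rightarrow> 'k)"
    by (simp add: loop_pow_def)
  have ph: "F.subst (G.subst (pbasis (s a, [a])))
      = F.subst_arrow a + K (- ?l) * ?I2 + K (nu3 a) * ?I3"
    unfolding Gi using fs by (simp add: F.subst_add F.subst_K e1 e2 e3)
  have eq: "F.subst_arrow a + K (- ?l) * ?I2 + K (nu3 a) * ?I3 - loop_pow a 1 =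
      K (- ?l) * (?I2 - (loop_pow a 2 + K ?l * loop_pow a 3 + K ?l * loop_pow a 3))
      + K (nu3 a) * (?I3 - loop_pow a 3)"
    unfolding Fi K_uminus K_nu3_eq[OF bl] K_0 by (simp add: algebra_simps)
  show ?thesis unfolding ph unfolding P1 unfolding eq using D1 D3
    by (intro ideal_gen_add' ideal_gen_K)
qed

lemma subst_GF_arrow: assumes a: "a \<in> Q1"
  shows "G.subst (F.subst (pbasis (s a, [a]))) - pbasis (s a, [a]) \<in> Ibar"
proof (cases "border_loop Q1 s t f a")
  case False
  then show ?thesis using ideal_gen_0
    by (simp add: G.subst_pbasis G.subst_path_arrow G.subst_arrow_non_border F.subst_pbasis
      F.subst_path_arrow F.subst_arrow_non_border)
next
  case bl: True
  let ?l = "lam a" let ?I2 = "pmult t (G.subst_arrow a) (G.subst_arrow a)"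
  let ?I3 = "pmult t (G.subst_arrow a) (pmult t (G.subst_arrow a) (G.subst_arrow a))"
  note rel = zero_rels_gens_Ibar bl border_rel_in_Ibar[OF bl]
  have D1: "?I2 - (loop_pow a 2 + K (- ?l) * loop_pow a 3 + K (- ?l) * loop_pow a 3) \<in> Ibar"
    using G.subst_arrow_square_mod[OF bl, of "gens_Ibar Q1 s t f m c b"]
      loop_pow_ge_4_in_ideal[OF rel]
    by simp
  have Fi: "F.subst (pbasis (s a, [a])) = loop_pow a 1 + K ?l * loop_pow a 2 + K 0 * loop_pow a 3"
    using F.subst_arrow_loop_pow[of a] by (simp add: F.subst_pbasis F.subst_path_arrow )
  have Gi: "G.subst_arrow a = loop_pow a 1 + K (- ?l) * loop_pow a 2 + K (nu3 a) * loop_pow a 3"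
    using G.subst_arrow_loop_pow[of a] by simp
  have P1: "pbasis (s a, [a]) = loop_pow a 1" by (simp add: loop_pow_def)
  have e1: "G.subst (loop_pow a 1) = G.subst_arrow a" "G.subst (loop_pow a (Suc 0))
      = G.subst_arrow a"
    by (simp_all add: loop_pow_def G.subst_pbasis G.subst_path_arrow)
  have e2: "G.subst (loop_pow a 2) = ?I2"
    by (simp add: loop_pow_def G.subst_pbasis G.subst_path_loop2[OF bl])
  have fs: "\<And>k. fsupp (loop_pow a k :: 'v \<times> 'a list \<Rightarrow> 'k)"
    by (simp add: loop_pow_def)
  have ph: "G.subst (F.subst (pbasis (s a, [a]))) = G.subst_arrow a + K ?l * ?I2"
    unfolding Fi K_0 using fs by (simp add: G.subst_add G.subst_K e1 e2 G.subst_zero)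
  have eq: "G.subst_arrow a + K ?l * ?I2 - loop_pow a 1 =
      K ?l * (?I2 - (loop_pow a 2 + K (- ?l) * loop_pow a 3 + K (- ?l) * loop_pow a 3))"
    unfolding Gi K_uminus K_nu3_eq[OF bl] by (simp add: algebra_simps)
  show ?thesis unfolding ph unfolding P1 unfolding eq using D1 by (intro ideal_gen_K)
qed

lemma subst_FG: "x \<in> KQ \<Longrightarrow> F.subst (G.subst x) - x \<in> I"
  using fs_alg_endo_congruent_id[OF fs_alg_endo_comp[OF F.subst_fs_alg_endo G.subst_fs_alg_endo]]
    arrow_ends F.subst_in_KQ G.subst_in_KQ subst_FG_arrow
  by (simp add: G.subst_pbasis F.subst_pbasis)

lemma subst_GF: "x \<in> KQ \<Longrightarrow> G.subst (F.subst x) - x \<in> Ibar"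
  using fs_alg_endo_congruent_id[OF fs_alg_endo_comp[OF G.subst_fs_alg_endo F.subst_fs_alg_endo]]
    arrow_ends F.subst_in_KQ G.subst_in_KQ subst_GF_arrow
  by (simp add: G.subst_pbasis F.subst_pbasis)

theorem quot_alg_iso_Ibar_I: "quot_alg_iso KQ (pmult t) (punit Q0) Ibar I"
  by (rule quot_alg_iso_of_inverse_endos[OF F.subst_fs_alg_endo _ _ F.subst_punit[OF finite_Q0]
        subst_F_Ibar subst_G_I subst_FG subst_GF refl refl])
    (auto intro: F.subst_in_KQ G.subst_in_KQ)

end

theorem proposition8p2:
  fixes Q0 :: "'v set" and Q1 :: "'a set" and s t :: "'a \<Rightarrow> 'v" and f :: "'a \<Rightarrow> 'a"
    and m :: "'a \<Rightarrow> nat" and c :: "'a \<Rightarrow> 'k::field" and b :: "'v \<Rightarrow> 'k"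
  assumes alg_closed: "\<forall>p :: 'k poly. 0 < degree p \<longrightarrow> (\<exists>x. poly p x = 0)"
    and char_not_2: "(2::'k) \<noteq> 0"
    and tq: "triangulation_quiver Q0 Q1 s t f"
    and three: "card Q0 \<ge> 3"
    and border: "border_vertices Q1 s t f \<noteq> {}"
    and wm: "weight_function Q1 s f m"
    and pc: "parameter_function Q1 s f c"
    and mn: "\<forall>a\<in>Q1. m a * orbsize Q1 s f a \<ge> 3"
  shows "quot_alg_iso (path_alg Q0 Q1 s t) (pmult t) (punit Q0)
           (idealIbar Q0 Q1 s t f m c b) (idealI Q0 Q1 s t f m c)"
proof -
  interpret border_deformation Q0 Q1 s t f m c b
    by unfold_locales (use tq char_not_2 three wm pc mn in auto)
  show ?thesis
    unfolding idealIbar_def idealI_def by (rule quot_alg_iso_Ibar_I)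
qed

end
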